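(* Under the standing assumptions (in which the $\sigma_l$ are only required to be left- and right-differentiable), with $\lambda>0$, $1\le p<\infty$ and $\Omega\in\{\Omega_{in},\Omega_{out}\}$, for every $B\in\mathbb{R}$ the set of dimension tuples $\mathbf{d}=(d_1,\dots,d_{L-1})$ for which there exists a proper $B$-local minimum $(\mathbf{d},\mathbf{W})$ of $E$ is bounded.
   Context: Network: for dimensions $d_0,\dots,d_L$ and weights $\mathbf{W}=(W_1,\dots,W_L)$, $W_l\in\mathbb{R}^{d_{l-1}\times d_l}$, define for a row vector $x\in\mathbb{R}^{d_0}$: $x_0=x$, $z_l=x_{l-1}W_l$, $x_l=\sigma_l.(z_l)$ (elementwise), $f(\mathbf{W},x)=x_L$; $d_0,d_L$ are fixed and $d_1,\dots,d_{L-1}$ vary. $E(\mathbf{d},\mathbf{W})=\frac{1}{|D|}\sum_{(x,y)\in D}e(f(\mathbf{W},x),y)+\Omega(\mathbf{W},\lambda,p)$ with $D$ a finite dataset of pairs $(x,y)$, $x\in\mathbb{R}^{d_0}$, $y\in Y$. $\Omega_{in}(\mathbf{W},\lambda,p)=\lambda\sum_{l=1}^L\sum_{j=1}^{d_l}\|(W_l(i,j))_{i}\|_p$, $\Omega_{out}(\mathbf{W},\lambda,p)=\lambda\sum_{l=1}^L\sum_{i=1}^{d_{l-1}}\|(W_l(i,j))_{j}\|_p$. Standing assumptions: each $\sigma_l$ is left- and right-differentiable everywhere, and there are functions $b_{1,l},b_{2,l}:\mathbb{R}_{\ge0}\to\mathbb{R}_{\ge0}$ with $|\sigma_l(s)|\le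 b_{1,l}(S)|s|$ and $|\sigma_l^{\leftarrow}(s)|,|\sigma_l^{\rightarrow}(s)|\le b_{2,l}(S)$ whenever $|s|\le S$; $e$ is nonnegative, differentiable in its first argument, and there is $b_3$ with $e(v,y)\le S\Rightarrow\|\partial e(v,y)/\partial v\|_\infty\le b_3(S)$. Definitions: The fan-in of hidden unit $j$ in layer $l$ ($1\le l\le L-1$) is column $j$ of $W_l$; its fan-out is row $j$ of $W_{l+1}$. A pair $(\mathbf{d},\mathbf{W})$ is a local minimum of $E$ if $\mathbf{W}$ is a local minimum of $E(\mathbf{d},\cdot)$ with $\mathbf{d}$ fixed; it is $B$-locally minimal if moreover $E(\mathbf{d},\mathbf{W})\le B$. The proper dimensionality of $\mathbf{W}$ is the dimension tuple obtained by deleting all hidden units whose fan-in or fan-out (or both) is the zero vector; $(\mathbf{d},\mathbf{W})$ is proper if $\mathbf{d}$ equals the proper dimensionality of $\mathbf{W}$. A proper $B$-local minimum is a $B$-locally minimal local minimum that is proper. *)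

theory Defs
  imports "HOL-Analysis.Analysis"
begin

text \<open>Weights: W l i j is entry (i,j) of the matrix W_l (layer l >= 1, row i < d (l-1),
  column j < d l). Dimension tuples: d :: nat => nat, with d 0 = d_0, d L = d_L.
  Vectors of hidden layers are nat => real (only indices < d l matter).
  The output space R^{d_L} is the type real^'o with d_L = CARD('o), identified with
  index set {..<d_L} via a fixed bijection.\<close>

definition out_idx :: "nat \<Rightarrow> 'o::finite" where
  "out_idx = (SOME f. bij_betw f {..<CARD('o)} (UNIV::'o set))"

definition to_outvec :: "(nat \<Rightarrow> real) \<Rightarrow> real^'o::finite" where
  "to_outvec v = (\<chi> k. v (inv_into {..<CARD('o)} out_idx k))"

fun fwd :: "(nat \<Rightarrow> real \<Rightarrow> real) \<Rightarrow> (nat \<Rightarrow> nat) \<Rightarrow> (nat \<Rightarrow> nat \<Rightarrow> nat \<Rightarrow> real)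
    \<Rightarrow> (nat \<Rightarrow> real) \<Rightarrow> nat \<Rightarrow> nat \<Rightarrow> real" where
  "fwd \<sigma> d W x 0 = x"
| "fwd \<sigma> d W x (Suc l) = (\<lambda>j. \<sigma> (Suc l) (\<Sum>i<d l. fwd \<sigma> d W x l i * W (Suc l) i j))"

definition net :: "(nat \<Rightarrow> real \<Rightarrow> real) \<Rightarrow> nat \<Rightarrow> (nat \<Rightarrow> nat) \<Rightarrow> (nat \<Rightarrow> nat \<Rightarrow> nat \<Rightarrow> real)
    \<Rightarrow> (nat \<Rightarrow> real) \<Rightarrow> real^'o::finite" where
  "net \<sigma> L d W x = to_outvec (fwd \<sigma> d W x L)"

definition Omega_in :: "real \<Rightarrow> real \<Rightarrow> nat \<Rightarrow> (nat \<Rightarrow> nat) \<Rightarrow> (nat \<Rightarrow> nat \<Rightarrow> nat \<Rightarrow> real) \<Rightarrow> real" where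
  "Omega_in lam p L d W =
     lam * (\<Sum>l\<in>{1..L}. \<Sum>j<d l. (\<Sum>i<d (l-1). \<bar>W l i j\<bar> powr p) powr (1/p))"

definition Omega_out :: "real \<Rightarrow> real \<Rightarrow> nat \<Rightarrow> (nat \<Rightarrow> nat) \<Rightarrow> (nat \<Rightarrow> nat \<Rightarrow> nat \<Rightarrow> real) \<Rightarrow> real" where
  "Omega_out lam p L d W =
     lam * (\<Sum>l\<in>{1..L}. \<Sum>i<d (l-1). (\<Sum>j<d l. \<bar>W l i j\<bar> powr p) powr (1/p))"

definition energy :: "(nat \<Rightarrow> real \<Rightarrow> real) \<Rightarrow> (real^'o::finite \<Rightarrow> 'y \<Rightarrow> real)
    \<Rightarrow> ((nat \<Rightarrow> real) \<times> 'y) set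
    \<Rightarrow> ((nat \<Rightarrow> nat) \<Rightarrow> (nat \<Rightarrow> nat \<Rightarrow> nat \<Rightarrow> real) \<Rightarrow> real)
    \<Rightarrow> nat \<Rightarrow> (nat \<Rightarrow> nat) \<Rightarrow> (nat \<Rightarrow> nat \<Rightarrow> nat \<Rightarrow> real) \<Rightarrow> real" where
  "energy \<sigma> e D \<Omega> L d W =
     (\<Sum>(x,y)\<in>D. e (net \<sigma> L d W x) y) / real (card D) + \<Omega> d W"

definition is_local_min ::
  "((nat \<Rightarrow> nat) \<Rightarrow> (nat \<Rightarrow> nat \<Rightarrow> nat \<Rightarrow> real) \<Rightarrow> real) \<Rightarrow> nat \<Rightarrow> (nat \<Rightarrow> nat)
    \<Rightarrow> (nat \<Rightarrow> nat \<Rightarrow> nat \<Rightarrow> real) \<Rightarrow> bool" where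
  "is_local_min E L d W \<longleftrightarrow>
     (\<exists>\<epsilon>>0. \<forall>W'. (\<forall>l\<in>{1..L}. \<forall>i<d (l-1). \<forall>j<d l. \<bar>W' l i j - W l i j\<bar> < \<epsilon>)
                   \<longrightarrow> E d W \<le> E d W')"

definition proper_dim :: "(nat \<Rightarrow> nat) \<Rightarrow> (nat \<Rightarrow> nat \<Rightarrow> nat \<Rightarrow> real) \<Rightarrow> nat \<Rightarrow> nat" where
  "proper_dim d W l = card {j. j < d l \<and> (\<exists>i<d (l-1). W l i j \<noteq> 0)
                                     \<and> (\<exists>k<d (Suc l). W (Suc l) j k \<noteq> 0)}"

definition is_proper :: "nat \<Rightarrow> (nat \<Rightarrow> nat) \<Rightarrow> (nat \<Rightarrow> nat \<Rightarrow> nat \<Rightarrow> real) \<Rightarrow> bool" where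
  "is_proper L d W \<longleftrightarrow> (\<forall>l\<in>{1..<L}. d l = proper_dim d W l)"

end

theory Submission
  imports Defs
begin

text \<open>
  Fix a proper local minimum \<open>(d, W)\<close> with energy at most \<open>B\<close>. Every fan then has \<open>p\<close>-norm at
  most \<open>R = B / \<lambda>\<close>. This bounds the gain of every layer in a suitable norm and hence, independently
  of the widths, all activations and the Lipschitz moduli of the activation functions near the
  actual preactivations. Shrinking the fan-out (for \<open>Omega_out\<close>) or the fan-in (for \<open>Omega_in\<close>)
  of a hidden unit by the factor \<open>1 - t\<close> lowers the regulariser by exactly \<open>\<lambda> t P\<close>, where \<open>P\<close> is
  the \<open>p\<close>-norm of that fan, but raises the data term by at most \<open>t P C s\<close>, where \<open>s\<close> is the 1-norm
  of the unit's other fan and \<open>C\<close> does not depend on the widths. By local minimality \<open>s \<ge> \<lambda> / C\<close>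
  for every unit. If all \<open>N\<close> units of a layer satisfy this while the \<open>n\<close> units of the adjacent
  layer have fans of \<open>p\<close>-norm at most \<open>R\<close>, then \<open>N \<le> n (C R n / \<lambda>)\<^sup>p\<close>. Iterating from the fixed
  input width (for \<open>Omega_out\<close>) or output width (for \<open>Omega_in\<close>) bounds every hidden width.
\<close>

type_synonym weights = "nat \<Rightarrow> nat \<Rightarrow> nat \<Rightarrow> real"

section \<open>Calm functions\<close>

text \<open>Calmness of \<open>f\<close> at \<open>z\<close> with modulus \<open>K\<close> is a Lipschitz estimate relative to the single point
  \<open>z\<close>; it is all that bounded one-sided derivatives provide.\<close>

definition calm_at :: "real \<Rightarrow> (real \<Rightarrow> real) \<Rightarrow> real \<Rightarrow> bool" where
  "calm_at K f z \<longleftrightarrow> (\<forall>\<^sub>F y in nhds z. \<bar>f y - f z\<bar> \<le> K * \<bar>y - z\<bar>)"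

lemma has_real_derivative_imp_eventually_calm:
  fixes f :: "real \<Rightarrow> real"
  assumes "(f has_real_derivative D) (at z within S)" and "\<bar>D\<bar> < K"
  shows "\<forall>\<^sub>F y in at z within S. \<bar>f y - f z\<bar> \<le> K * \<bar>y - z\<bar>"
proof -
  have "((\<lambda>y. \<bar>(f y - f z) / (y - z)\<bar>) \<longlongrightarrow> \<bar>D\<bar>) (at z within S)"
    using assms(1) by (intro tendsto_rabs) (simp add: has_field_derivative_iff)
  then have "\<forall>\<^sub>F y in at z within S. \<bar>(f y - f z) / (y - z)\<bar> < K"
    using assms(2) by (rule order_tendstoD(2))
  moreover have "\<forall>\<^sub>F y in at z within S. y \<noteq> z"
    by (simp add: eventually_at_filter)
  ultimately show ?thesis
  proof eventually_elim
    case (elim y)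
    then have "\<bar>f y - f z\<bar> = \<bar>(f y - f z) / (y - z)\<bar> * \<bar>y - z\<bar>"
      by (simp add: abs_divide)
    also have "\<dots> \<le> K * \<bar>y - z\<bar>"
      using elim by (intro mult_right_mono) auto
    finally show ?case .
  qed
qed

lemma calm_at_if_one_sided_derivatives:
  assumes "(f has_real_derivative Dl) (at_left z)" and "(f has_real_derivative Dr) (at_right z)"
    and "\<bar>Dl\<bar> < K" and "\<bar>Dr\<bar> < K"
  shows "calm_at K f z"
  unfolding calm_at_def eventually_nhds_conv_at eventually_at_split
  using assms by (simp add: has_real_derivative_imp_eventually_calm)

lemma calm_at_compose:
  assumes "calm_at K f z" and "(g \<longlongrightarrow> z) F"
  shows "\<forall>\<^sub>F t in F. \<bar>f (g t) - f z\<bar> \<le> K * \<bar>g t - z\<bar>"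
  using eventually_compose_filterlim[OF _ assms(2)] assms(1) unfolding calm_at_def by blast

lemma tendsto_at_right_0_if_linear_bound:
  fixes g :: "real \<Rightarrow> real"
  assumes "\<forall>\<^sub>F t in at_right 0. \<bar>g t - z\<bar> \<le> t * C"
  shows "(g \<longlongrightarrow> z) (at_right 0)"
proof -
  have lim: "((\<lambda>t. t * C) \<longlongrightarrow> 0) (at_right (0::real))"
    by (rule tendsto_mult_left_zero) (rule tendsto_ident_at)
  have "((\<lambda>t. g t - z) \<longlongrightarrow> 0) (at_right 0)"
    by (rule Lim_null_comparison[OF _ lim]) (use assms in simp)
  then show ?thesis by (rule LIM_zero_cancel)
qed

lemma eventually_at_right_0_less_1: "\<forall>\<^sub>F t in at_right (0::real). t < 1"
  unfolding eventually_at_right_field by (intro exI[of _ 1]) auto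

section \<open>Layer maps and absolute norms\<close>

definition vec_mat :: "nat \<Rightarrow> (nat \<Rightarrow> nat \<Rightarrow> real) \<Rightarrow> (nat \<Rightarrow> real) \<Rightarrow> nat \<Rightarrow> real" where
  "vec_mat n A u k = (\<Sum>i<n. u i * A i k)"

lemma fwd_Suc_vec_mat:
  "fwd \<sigma> d W x (Suc l) j = \<sigma> (Suc l) (vec_mat (d l) (W (Suc l)) (fwd \<sigma> d W x l) j)"
  by (simp add: vec_mat_def)

declare fwd.simps(2)[simp del]

lemma vec_mat_diff: "vec_mat n A u k - vec_mat n A v k = vec_mat n A (\<lambda>i. u i - v i) k"
  by (simp add: vec_mat_def sum_subtractf left_diff_distrib)

lemma abs_vec_mat_le: "\<bar>vec_mat n A u k\<bar> \<le> (\<Sum>i<n. \<bar>u i\<bar> * \<bar>A i k\<bar>)"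
  unfolding vec_mat_def by (rule order_trans[OF sum_abs]) (simp add: abs_mult)

lemma vec_mat_single_entry:
  assumes "\<And>i. i < n \<Longrightarrow> i \<noteq> j \<Longrightarrow> u i = 0" and "j < n"
  shows "vec_mat n A u k = u j * A j k"
proof -
  have "vec_mat n A u k = (\<Sum>i<n. if i = j then u j * A j k else 0)"
    unfolding vec_mat_def using assms(1) by (intro sum.cong) auto
  then show ?thesis using assms(2) by simp
qed

lemma fwd_cong: "(\<And>m. 1 \<le> m \<Longrightarrow> m \<le> n \<Longrightarrow> W' m = W m) \<Longrightarrow> fwd \<sigma> d W' x n = fwd \<sigma> d W x n"
proof (induction n)
  case (Suc n)
  then have "fwd \<sigma> d W' x n = fwd \<sigma> d W x n" and "W' (Suc n) = W (Suc n)" by simp_all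
  then show ?case by (intro ext) (simp add: fwd_Suc_vec_mat)
qed simp

text \<open>The max-norm serves \<open>Omega_out\<close>, which
  bounds the column sums of every weight matrix, the 1-norm serves \<open>Omega_in\<close>, which bounds the row sums.\<close>

locale absolute_norm =
  fixes N :: "nat \<Rightarrow> (nat \<Rightarrow> real) \<Rightarrow> real"
  assumes abs_le_norm: "k < n \<Longrightarrow> \<bar>v k\<bar> \<le> N n v"
    and norm_le_scaled: "0 \<le> c \<Longrightarrow> (\<And>k. k < n \<Longrightarrow> \<bar>u k\<bar> \<le> c * \<bar>v k\<bar>) \<Longrightarrow> N n u \<le> c * N n v"
    and norm_le_sum_abs: "N n v \<le> (\<Sum>k<n. \<bar>v k\<bar>)"
    and norm_nonneg: "0 \<le> N n v"
begin

lemma abs_vec_mat_le_norm: "\<bar>vec_mat n A u k\<bar> \<le> N n u * (\<Sum>i<n. \<bar>A i k\<bar>)"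
proof -
  have "\<bar>vec_mat n A u k\<bar> \<le> (\<Sum>i<n. \<bar>u i\<bar> * \<bar>A i k\<bar>)"
    by (rule abs_vec_mat_le)
  also have "\<dots> \<le> (\<Sum>i<n. N n u * \<bar>A i k\<bar>)"
    by (intro sum_mono mult_right_mono abs_le_norm) auto
  finally show ?thesis by (simp add: sum_distrib_left)
qed

lemma norm_vec_mat_single_entry:
  assumes "\<And>i. i < n \<Longrightarrow> i \<noteq> j \<Longrightarrow> u i = 0" and "j < n"
  shows "N m (vec_mat n A u) \<le> \<bar>u j\<bar> * N m (A j)"
  by (rule norm_le_scaled) (simp_all add: vec_mat_single_entry[OF assms] abs_mult)

lemma calm_layer_step:
  assumes calm: "\<And>k. k < n \<Longrightarrow> calm_at K f (z k)" and K: "0 \<le> K"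
    and small: "\<forall>\<^sub>F t in at_right 0. N n (\<lambda>k. z' t k - z k) \<le> t * C"
  shows "\<forall>\<^sub>F t in at_right 0. N n (\<lambda>k. f (z' t k) - f (z k)) \<le> K * (t * C)"
proof -
  have "\<forall>\<^sub>F t in at_right 0. \<bar>f (z' t k) - f (z k)\<bar> \<le> K * \<bar>z' t k - z k\<bar>" if k: "k < n" for k
  proof (rule calm_at_compose[OF calm[OF k]], rule tendsto_at_right_0_if_linear_bound)
    show "\<forall>\<^sub>F t in at_right 0. \<bar>z' t k - z k\<bar> \<le> t * C"
    proof (use small in eventually_elim)
      case (elim t)
      show ?case using abs_le_norm[OF k, of "\<lambda>k. z' t k - z k"] elim by simp
    qed
  qed
  then have "\<forall>\<^sub>F t in at_right 0. \<forall>k\<in>{..<n}. \<bar>f (z' t k) - f (z k)\<bar> \<le> K * \<bar>z' t k - z k\<bar>"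
    by (intro eventually_ball_finite) auto
  with small show ?thesis
  proof eventually_elim
    case (elim t)
    then have "N n (\<lambda>k. f (z' t k) - f (z k)) \<le> K * N n (\<lambda>k. z' t k - z k)"
      using K by (intro norm_le_scaled) auto
    also have "\<dots> \<le> K * (t * C)"
      using elim K by (intro mult_left_mono) auto
    finally show ?case .
  qed
qed

end

definition max_norm :: "nat \<Rightarrow> (nat \<Rightarrow> real) \<Rightarrow> real" where
  "max_norm n v = Max (insert 0 ((\<lambda>k. \<bar>v k\<bar>) ` {..<n}))"

definition sum_norm :: "nat \<Rightarrow> (nat \<Rightarrow> real) \<Rightarrow> real" where
  "sum_norm n v = (\<Sum>k<n. \<bar>v k\<bar>)"

lemma max_norm_nonneg: "0 \<le> max_norm n v"
  by (simp add: max_norm_def)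

interpretation max_norm: absolute_norm max_norm
proof
  show "\<bar>v k\<bar> \<le> max_norm n v" if "k < n" for k n v
    using that by (simp add: max_norm_def)
  show "max_norm n u \<le> c * max_norm n v"
    if "0 \<le> c" and "\<And>k. k < n \<Longrightarrow> \<bar>u k\<bar> \<le> c * \<bar>v k\<bar>" for c n u v
  proof -
    have "c * \<bar>v k\<bar> \<le> c * max_norm n v" if "k < n" for k
      using \<open>0 \<le> c\<close> \<open>k < n\<close> by (intro mult_left_mono) (simp_all add: max_norm_def)
    then show ?thesis
      using that max_norm_nonneg[of n v] by (force simp: max_norm_def intro: order_trans)
  qed
  show "max_norm n v \<le> (\<Sum>k<n. \<bar>v k\<bar>)" for n v
    by (auto simp: max_norm_def sum_nonneg intro: member_le_sum)
qed (fact max_norm_nonneg)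

interpretation sum_norm: absolute_norm sum_norm
  by unfold_locales (auto simp: sum_norm_def sum_distrib_left intro: member_le_sum sum_mono sum_nonneg)

lemma max_norm_gain:
  assumes "\<And>k. k < m \<Longrightarrow> (\<Sum>i<n. \<bar>A i k\<bar>) \<le> R" and "0 \<le> R"
  shows "max_norm m (vec_mat n A u) \<le> R * max_norm n u"
proof -
  have "\<bar>vec_mat n A u k\<bar> \<le> R * max_norm n u" if "k < m" for k
  proof -
    have "\<bar>vec_mat n A u k\<bar> \<le> max_norm n u * (\<Sum>i<n. \<bar>A i k\<bar>)"
      by (rule max_norm.abs_vec_mat_le_norm)
    also have "\<dots> \<le> max_norm n u * R"
      using assms(1)[OF that] by (intro mult_left_mono max_norm_nonneg)
    finally show ?thesis by (simp add: mult.commute)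
  qed
  then show ?thesis
    using assms(2) max_norm_nonneg[of n u] by (auto simp: max_norm_def)
qed

lemma sum_norm_gain:
  assumes "\<And>i. i < n \<Longrightarrow> (\<Sum>k<m. \<bar>A i k\<bar>) \<le> R" and "0 \<le> R"
  shows "sum_norm m (vec_mat n A u) \<le> R * sum_norm n u"
proof -
  have "sum_norm m (vec_mat n A u) \<le> (\<Sum>k<m. \<Sum>i<n. \<bar>u i\<bar> * \<bar>A i k\<bar>)"
    unfolding sum_norm_def by (intro sum_mono abs_vec_mat_le)
  also have "\<dots> = (\<Sum>i<n. \<bar>u i\<bar> * (\<Sum>k<m. \<bar>A i k\<bar>))"
    by (subst sum.swap) (simp add: sum_distrib_left)
  also have "\<dots> \<le> (\<Sum>i<n. \<bar>u i\<bar> * R)"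
    using assms(1) by (intro sum_mono mult_left_mono) auto
  finally show ?thesis by (simp add: sum_norm_def sum_distrib_left mult.commute)
qed

definition layer_gains_le ::
  "(nat \<Rightarrow> (nat \<Rightarrow> real) \<Rightarrow> real) \<Rightarrow> nat \<Rightarrow> (nat \<Rightarrow> nat) \<Rightarrow> weights \<Rightarrow> real \<Rightarrow> bool" where
  "layer_gains_le N L d W R \<longleftrightarrow>
     (\<forall>m\<in>{1..L}. \<forall>u. N (d m) (vec_mat (d (m - 1)) (W m) u) \<le> R * N (d (m - 1)) u)"

section \<open>Fan norms and the regularisers\<close>

definition pnorm :: "real \<Rightarrow> nat \<Rightarrow> (nat \<Rightarrow> real) \<Rightarrow> real" where
  "pnorm p n v = (\<Sum>k<n. \<bar>v k\<bar> powr p) powr (1 / p)"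

lemma Omega_in_pnorm:
  "Omega_in lam p L d W = lam * (\<Sum>l\<in>{1..L}. \<Sum>j<d l. pnorm p (d (l - 1)) (\<lambda>i. W l i j))"
  by (simp add: Omega_in_def pnorm_def)

lemma Omega_out_pnorm:
  "Omega_out lam p L d W = lam * (\<Sum>l\<in>{1..L}. \<Sum>i<d (l - 1). pnorm p (d l) (W l i))"
  by (simp add: Omega_out_def pnorm_def)

lemma pnorm_nonneg: "0 \<le> pnorm p n v"
  by (simp add: pnorm_def)

lemma abs_le_pnorm:
  assumes "0 < p" and "k < n"
  shows "\<bar>v k\<bar> \<le> pnorm p n v"
proof -
  have "\<bar>v k\<bar> = (\<bar>v k\<bar> powr p) powr (1 / p)"
    using assms(1) by (cases "v k = 0") (auto simp: powr_powr)
  also have "\<dots> \<le> pnorm p n v"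
    unfolding pnorm_def using assms by (intro powr_mono2 member_le_sum) auto
  finally show ?thesis .
qed

lemma pnorm_scale:
  assumes "0 \<le> c" and "0 < p"
  shows "pnorm p n (\<lambda>k. c * v k) = c * pnorm p n v"
proof -
  have "(\<Sum>k<n. \<bar>c * v k\<bar> powr p) = c powr p * (\<Sum>k<n. \<bar>v k\<bar> powr p)"
    using assms by (simp add: abs_mult powr_mult sum_distrib_left)
  moreover have "(c powr p) powr (1 / p) = c"
    using assms by (cases "c = 0") (auto simp: powr_powr)
  ultimately show ?thesis
    by (simp add: pnorm_def powr_mult sum_nonneg)
qed

lemma max_norm_le_pnorm: "0 < p \<Longrightarrow> max_norm n v \<le> pnorm p n v"
  by (auto simp: max_norm_def pnorm_nonneg intro: abs_le_pnorm)

lemma abs_vec_mat_le_sum_norm_pnorm: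
  assumes "0 < p"
  shows "\<bar>vec_mat n A u k\<bar> \<le> sum_norm n u * pnorm p n (\<lambda>i. A i k)"
proof -
  have "\<bar>vec_mat n A u k\<bar> \<le> (\<Sum>i<n. \<bar>u i\<bar> * \<bar>A i k\<bar>)"
    by (rule abs_vec_mat_le)
  also have "\<dots> \<le> (\<Sum>i<n. \<bar>u i\<bar> * pnorm p n (\<lambda>i. A i k))"
    using assms by (intro sum_mono mult_left_mono abs_le_pnorm) auto
  finally show ?thesis by (simp add: sum_norm_def sum_distrib_right)
qed

lemma Omega_out_nonneg: "0 \<le> lam \<Longrightarrow> 0 \<le> Omega_out lam p L d W"
  by (simp add: Omega_out_pnorm pnorm_nonneg sum_nonneg)

lemma Omega_in_nonneg: "0 \<le> lam \<Longrightarrow> 0 \<le> Omega_in lam p L d W"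
  by (simp add: Omega_in_pnorm pnorm_nonneg sum_nonneg)

lemma Omega_out_layer_le:
  assumes "Omega_out lam p L d W \<le> lam * R" and "0 < lam" and "m \<in> {1..L}"
  shows "(\<Sum>i<d (m - 1). pnorm p (d m) (W m i)) \<le> R"
proof -
  have "(\<Sum>i<d (m - 1). pnorm p (d m) (W m i)) \<le> (\<Sum>l\<in>{1..L}. \<Sum>i<d (l - 1). pnorm p (d l) (W l i))"
    using assms(3) by (intro member_le_sum sum_nonneg) (auto simp: pnorm_nonneg)
  also have "\<dots> \<le> R"
    using assms(1,2) by (simp add: Omega_out_pnorm)
  finally show ?thesis .
qed

lemma Omega_in_layer_le:
  assumes "Omega_in lam p L d W \<le> lam * R" and "0 < lam" and "m \<in> {1..L}"
  shows "(\<Sum>k<d m. pnorm p (d (m - 1)) (\<lambda>i. W m i k)) \<le> R"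
proof -
  have "(\<Sum>k<d m. pnorm p (d (m - 1)) (\<lambda>i. W m i k))
      \<le> (\<Sum>l\<in>{1..L}. \<Sum>k<d l. pnorm p (d (l - 1)) (\<lambda>i. W l i k))"
    using assms(3) by (intro member_le_sum sum_nonneg) (auto simp: pnorm_nonneg)
  also have "\<dots> \<le> R"
    using assms(1,2) by (simp add: Omega_in_pnorm)
  finally show ?thesis .
qed

lemma Omega_out_le_imp_max_norm_gains:
  assumes "Omega_out lam p L d W \<le> lam * R" and "0 < lam" and "0 < p"
  shows "layer_gains_le max_norm L d W R"
  unfolding layer_gains_le_def
proof (intro ballI allI max_norm_gain)
  fix m k assume m: "m \<in> {1..L}" and "k < d m"
  have "(\<Sum>i<d (m - 1). \<bar>W m i k\<bar>) \<le> (\<Sum>i<d (m - 1). pnorm p (d m) (W m i))"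
    using \<open>k < d m\<close> \<open>0 < p\<close> by (intro sum_mono abs_le_pnorm)
  also have "\<dots> \<le> R"
    using assms(1,2) m by (rule Omega_out_layer_le)
  finally show "(\<Sum>i<d (m - 1). \<bar>W m i k\<bar>) \<le> R" .
next
  show "0 \<le> R"
    using order_trans[OF Omega_out_nonneg assms(1)] assms(2) by (simp add: zero_le_mult_iff)
qed

lemma Omega_in_le_imp_sum_norm_gains:
  assumes "Omega_in lam p L d W \<le> lam * R" and "0 < lam" and "0 < p"
  shows "layer_gains_le sum_norm L d W R"
  unfolding layer_gains_le_def
proof (intro ballI allI sum_norm_gain)
  fix m i assume m: "m \<in> {1..L}" and "i < d (m - 1)"
  have "(\<Sum>k<d m. \<bar>W m i k\<bar>) \<le> (\<Sum>k<d m. pnorm p (d (m - 1)) (\<lambda>i. W m i k))"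
    using \<open>i < d (m - 1)\<close> \<open>0 < p\<close> by (intro sum_mono abs_le_pnorm)
  also have "\<dots> \<le> R"
    using assms(1,2) m by (rule Omega_in_layer_le)
  finally show "(\<Sum>k<d m. \<bar>W m i k\<bar>) \<le> R" .
next
  show "0 \<le> R"
    using order_trans[OF Omega_in_nonneg assms(1)] assms(2) by (simp add: zero_le_mult_iff)
qed

definition scale_fan_out :: "nat \<Rightarrow> nat \<Rightarrow> real \<Rightarrow> weights \<Rightarrow> weights" where
  "scale_fan_out l j c W = W(Suc l := (\<lambda>i k. if i = j then c * W (Suc l) i k else W (Suc l) i k))"

definition scale_fan_in :: "nat \<Rightarrow> nat \<Rightarrow> real \<Rightarrow> weights \<Rightarrow> weights" where
  "scale_fan_in l j c W = W(l := (\<lambda>i k. if k = j then c * W l i k else W l i k))"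

lemma tendsto_one_minus_mult: "((\<lambda>t. (1 - t) * w) \<longlongrightarrow> w) (at_right (0::real))"
proof -
  have "((\<lambda>t. (1 - t) * w) \<longlongrightarrow> (1 - 0) * w) (at_right (0::real))"
    by (intro tendsto_mult_right tendsto_diff tendsto_const tendsto_ident_at)
  then show ?thesis by simp
qed

lemma tendsto_scale_fan_out: "((\<lambda>t. scale_fan_out l j (1 - t) W m i k) \<longlongrightarrow> W m i k) (at_right 0)"
  by (cases "m = Suc l"; cases "i = j") (simp_all add: scale_fan_out_def tendsto_one_minus_mult)

lemma tendsto_scale_fan_in: "((\<lambda>t. scale_fan_in l j (1 - t) W m i k) \<longlongrightarrow> W m i k) (at_right 0)"
  by (cases "m = l"; cases "k = j") (simp_all add: scale_fan_in_def tendsto_one_minus_mult)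

lemma sum_sum_update_single:
  fixes f g :: "'a \<Rightarrow> 'b \<Rightarrow> 'c::ab_group_add"
  assumes "finite A" and "\<And>m. finite (B m)" and "a \<in> A" and "b \<in> B a"
    and "\<And>m i. m \<in> A \<Longrightarrow> i \<in> B m \<Longrightarrow> (m, i) \<noteq> (a, b) \<Longrightarrow> g m i = f m i"
  shows "(\<Sum>m\<in>A. \<Sum>i\<in>B m. g m i) = (\<Sum>m\<in>A. \<Sum>i\<in>B m. f m i) + (g a b - f a b)"
proof -
  have "(\<Sum>m\<in>A. \<Sum>i\<in>B m. g m i)
      = (\<Sum>m\<in>A. \<Sum>i\<in>B m. f m i + (if m = a \<and> i = b then g a b - f a b else 0))"
    using assms(5) by (intro sum.cong) auto
  also have "\<dots> = (\<Sum>m\<in>A. \<Sum>i\<in>B m. f m i) + (\<Sum>m\<in>A. \<Sum>i\<in>B m. if m = a \<and> i = b then g a b - f a b else 0)"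
    by (simp add: sum.distrib)
  also have "(\<Sum>m\<in>A. \<Sum>i\<in>B m. if m = a \<and> i = b then g a b - f a b else 0)
      = (\<Sum>m\<in>A. if m = a then g a b - f a b else 0)"
    using assms(2,4) by (intro sum.cong) (auto simp: sum.delta)
  finally show ?thesis using assms(1,3) by simp
qed

lemma Omega_out_scale_fan_out:
  assumes "0 \<le> c" and "0 < p" and "l < L" and "j < d l"
  shows "Omega_out lam p L d (scale_fan_out l j c W)
       = Omega_out lam p L d W - lam * (1 - c) * pnorm p (d (Suc l)) (W (Suc l) j)"
proof -
  have sums: "(\<Sum>m\<in>{1..L}. \<Sum>i<d (m - 1). pnorm p (d m) (scale_fan_out l j c W m i))
      = (\<Sum>m\<in>{1..L}. \<Sum>i<d (m - 1). pnorm p (d m) (W m i))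
        + (c * pnorm p (d (Suc l)) (W (Suc l) j) - pnorm p (d (Suc l)) (W (Suc l) j))"
    using assms by (subst sum_sum_update_single[where a = "Suc l" and b = j])
      (auto simp: scale_fan_out_def pnorm_scale)
  show ?thesis unfolding Omega_out_pnorm sums by (simp add: algebra_simps)
qed

lemma Omega_in_scale_fan_in:
  assumes "0 \<le> c" and "0 < p" and "l \<in> {1..L}" and "j < d l"
  shows "Omega_in lam p L d (scale_fan_in l j c W)
       = Omega_in lam p L d W - lam * (1 - c) * pnorm p (d (l - 1)) (\<lambda>i. W l i j)"
proof -
  have sums: "(\<Sum>m\<in>{1..L}. \<Sum>k<d m. pnorm p (d (m - 1)) (\<lambda>i. scale_fan_in l j c W m i k))
      = (\<Sum>m\<in>{1..L}. \<Sum>k<d m. pnorm p (d (m - 1)) (\<lambda>i. W m i k))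
        + (c * pnorm p (d (l - 1)) (\<lambda>i. W l i j) - pnorm p (d (l - 1)) (\<lambda>i. W l i j))"
    using assms by (subst sum_sum_update_single[where a = l and b = j])
      (auto simp: scale_fan_in_def pnorm_scale)
  show ?thesis unfolding Omega_in_pnorm sums by (simp add: algebra_simps)
qed

lemma vec_mat_scale_fan_out:
  assumes "j < d l"
  shows "vec_mat (d l) (scale_fan_out l j c W (Suc l)) u k
       = vec_mat (d l) (W (Suc l)) u k - (1 - c) * (u j * W (Suc l) j k)"
proof -
  have "vec_mat (d l) (scale_fan_out l j c W (Suc l)) u k
      = (\<Sum>i<d l. u i * W (Suc l) i k - (if i = j then (1 - c) * (u j * W (Suc l) j k) else 0))"
    unfolding vec_mat_def scale_fan_out_def by (intro sum.cong) (auto simp: algebra_simps)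
  then show ?thesis using assms by (simp add: sum_subtractf vec_mat_def)
qed

lemma vec_mat_scale_fan_in:
  "vec_mat n (scale_fan_in l j c W l) u k = (if k = j then c * vec_mat n (W l) u k else vec_mat n (W l) u k)"
  by (simp add: vec_mat_def scale_fan_in_def sum_distrib_left mult_ac)

lemma fwd_scale_fan_out: "m \<le> l \<Longrightarrow> fwd \<sigma> d (scale_fan_out l j c W) x m = fwd \<sigma> d W x m"
  by (rule fwd_cong) (simp add: scale_fan_out_def)

lemma fwd_scale_fan_in: "m < l \<Longrightarrow> fwd \<sigma> d (scale_fan_in l j c W) x m = fwd \<sigma> d W x m"
  by (rule fwd_cong) (simp add: scale_fan_in_def)

section \<open>Propagation of perturbations\<close>

fun act_bound :: "(nat \<Rightarrow> real \<Rightarrow> real) \<Rightarrow> real \<Rightarrow> real \<Rightarrow> nat \<Rightarrow> real" where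
  "act_bound b1 X0 R 0 = X0"
| "act_bound b1 X0 R (Suc m) = b1 (Suc m) (act_bound b1 X0 R m * R) * (act_bound b1 X0 R m * R)"

locale activations =
  fixes \<sigma> :: "nat \<Rightarrow> real \<Rightarrow> real" and L :: nat and b1 b2 :: "nat \<Rightarrow> real \<Rightarrow> real"
  assumes sig_left: "\<forall>l\<in>{1..L}. \<forall>s. \<exists>Dl. (\<sigma> l has_real_derivative Dl) (at_left s)"
    and sig_right: "\<forall>l\<in>{1..L}. \<forall>s. \<exists>Dr. (\<sigma> l has_real_derivative Dr) (at_right s)"
    and b1_nonneg: "\<forall>l\<in>{1..L}. \<forall>S\<ge>0. b1 l S \<ge> 0"
    and b2_nonneg: "\<forall>l\<in>{1..L}. \<forall>S\<ge>0. b2 l S \<ge> 0"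
    and sig_b1: "\<forall>l\<in>{1..L}. \<forall>S s. \<bar>s\<bar> \<le> S \<longrightarrow> \<bar>\<sigma> l s\<bar> \<le> b1 l S * \<bar>s\<bar>"
    and sig_b2_left: "\<forall>l\<in>{1..L}. \<forall>S s Dl. \<bar>s\<bar> \<le> S \<longrightarrow>
         (\<sigma> l has_real_derivative Dl) (at_left s) \<longrightarrow> \<bar>Dl\<bar> \<le> b2 l S"
    and sig_b2_right: "\<forall>l\<in>{1..L}. \<forall>S s Dr. \<bar>s\<bar> \<le> S \<longrightarrow>
         (\<sigma> l has_real_derivative Dr) (at_right s) \<longrightarrow> \<bar>Dr\<bar> \<le> b2 l S"
begin

lemma act_bound_nonneg: "0 \<le> X0 \<Longrightarrow> 0 \<le> R \<Longrightarrow> m \<le> L \<Longrightarrow> 0 \<le> act_bound b1 X0 R m"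
  by (induction m) (use b1_nonneg in auto)

text \<open>The summand 1 makes the bound \<open>b2\<close> on the one-sided derivatives strict, as calmness requires.\<close>

definition lip_const :: "real \<Rightarrow> real \<Rightarrow> nat \<Rightarrow> real" where
  "lip_const X0 R m = b2 m (act_bound b1 X0 R (m - 1) * R) + 1"

definition tail_gain :: "real \<Rightarrow> real \<Rightarrow> nat \<Rightarrow> real" where
  "tail_gain X0 R a = (\<Prod>m\<in>{Suc a..L}. lip_const X0 R m * R)"

lemma lip_const_pos: "0 \<le> X0 \<Longrightarrow> 0 \<le> R \<Longrightarrow> m \<in> {1..L} \<Longrightarrow> 0 < lip_const X0 R m"
  using b2_nonneg act_bound_nonneg[of X0 R "m - 1"] by (auto simp: lip_const_def add_nonneg_pos)

lemma tail_gain_nonneg: "0 \<le> X0 \<Longrightarrow> 0 \<le> R \<Longrightarrow> 0 \<le> tail_gain X0 R a"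
  unfolding tail_gain_def
  by (intro prod_nonneg mult_nonneg_nonneg less_imp_le[OF lip_const_pos]) auto

lemma calm_activation:
  assumes "m \<in> {1..L}" and "\<bar>z\<bar> \<le> S"
  shows "calm_at (b2 m S + 1) (\<sigma> m) z"
proof -
  obtain Dl Dr where Dl: "(\<sigma> m has_real_derivative Dl) (at_left z)"
    and Dr: "(\<sigma> m has_real_derivative Dr) (at_right z)"
    using sig_left sig_right assms(1) by blast
  have "\<bar>Dl\<bar> \<le> b2 m S" and "\<bar>Dr\<bar> \<le> b2 m S"
    using sig_b2_left sig_b2_right assms Dl Dr by blast+
  then show ?thesis
    by (intro calm_at_if_one_sided_derivatives[OF Dl Dr]) auto
qed

end

locale normed_network = activations \<sigma> L b1 b2 + absolute_norm N for \<sigma> L b1 b2 N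
begin

context
  fixes d :: "nat \<Rightarrow> nat" and W :: weights and x :: "nat \<Rightarrow> real" and X0 R :: real
  assumes gain: "layer_gains_le N L d W R"
    and input: "N (d 0) x \<le> X0" and X0: "0 \<le> X0" and R: "0 \<le> R"
begin

lemma layer_gain: "m < L \<Longrightarrow> N (d (Suc m)) (vec_mat (d m) (W (Suc m)) u) \<le> R * N (d m) u"
  using gain by (auto simp: layer_gains_le_def dest!: bspec[where x = "Suc m"])

lemma preactivation_norm_le:
  assumes "N (d m) (fwd \<sigma> d W x m) \<le> A" and "m < L"
  shows "N (d (Suc m)) (vec_mat (d m) (W (Suc m)) (fwd \<sigma> d W x m)) \<le> A * R"
proof -
  have "N (d (Suc m)) (vec_mat (d m) (W (Suc m)) (fwd \<sigma> d W x m)) \<le> R * N (d m) (fwd \<sigma> d W x m)"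
    using \<open>m < L\<close> by (rule layer_gain)
  also have "\<dots> \<le> R * A" using assms(1) R by (rule mult_left_mono)
  finally show ?thesis by (simp add: mult.commute)
qed

lemma activation_norm_le: "m \<le> L \<Longrightarrow> N (d m) (fwd \<sigma> d W x m) \<le> act_bound b1 X0 R m"
proof (induction m)
  case 0
  then show ?case using input by simp
next
  case (Suc m)
  define A where "A = act_bound b1 X0 R m"
  let ?z = "vec_mat (d m) (W (Suc m)) (fwd \<sigma> d W x m)"
  have z: "N (d (Suc m)) ?z \<le> A * R"
    using Suc by (intro preactivation_norm_le) (simp_all add: A_def)
  have b1: "0 \<le> b1 (Suc m) (A * R)"
    using b1_nonneg Suc.prems act_bound_nonneg[OF X0 R, of m] R by (simp add: A_def)
  have "N (d (Suc m)) (fwd \<sigma> d W x (Suc m)) \<le> b1 (Suc m) (A * R) * N (d (Suc m)) ?z"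
  proof (rule norm_le_scaled[OF b1])
    fix k assume "k < d (Suc m)"
    then have "\<bar>?z k\<bar> \<le> A * R" using z abs_le_norm order_trans by blast
    moreover have "Suc m \<in> {1..L}" using Suc.prems by simp
    ultimately show "\<bar>fwd \<sigma> d W x (Suc m) k\<bar> \<le> b1 (Suc m) (A * R) * \<bar>?z k\<bar>"
      using sig_b1 by (simp add: fwd_Suc_vec_mat)
  qed
  also have "\<dots> \<le> b1 (Suc m) (A * R) * (A * R)"
    using z b1 by (rule mult_left_mono)
  finally show ?case by (simp add: A_def)
qed

lemma abs_preactivation_le:
  assumes "m < L" and "k < d (Suc m)"
  shows "\<bar>vec_mat (d m) (W (Suc m)) (fwd \<sigma> d W x m) k\<bar> \<le> act_bound b1 X0 R m * R"
proof -
  have "N (d (Suc m)) (vec_mat (d m) (W (Suc m)) (fwd \<sigma> d W x m)) \<le> act_bound b1 X0 R m * R"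
    using assms(1) by (intro preactivation_norm_le activation_norm_le) simp_all
  then show ?thesis using abs_le_norm[OF assms(2)] order_trans by blast
qed

lemma calm_at_preactivation:
  assumes "m \<in> {1..L}" and "k < d m"
  shows "calm_at (lip_const X0 R m) (\<sigma> m) (vec_mat (d (m - 1)) (W m) (fwd \<sigma> d W x (m - 1)) k)"
  using assms abs_preactivation_le[of "m - 1" k]
  by (auto simp: lip_const_def intro: calm_activation)

lemma abs_activation_le_fan_in:
  assumes "l \<in> {1..L}" and "j < d l"
  shows "\<bar>fwd \<sigma> d W x l j\<bar>
    \<le> b1 l (act_bound b1 X0 R (l - 1) * R) * (act_bound b1 X0 R (l - 1) * (\<Sum>i<d (l - 1). \<bar>W l i j\<bar>))"
proof -
  obtain m where l: "l = Suc m" using assms(1) by (cases l) auto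
  define A where "A = act_bound b1 X0 R m"
  let ?z = "vec_mat (d m) (W l) (fwd \<sigma> d W x m) j"
  have "\<bar>?z\<bar> \<le> A * R"
    using abs_preactivation_le[of m j] assms by (simp add: l A_def)
  then have "\<bar>fwd \<sigma> d W x l j\<bar> \<le> b1 l (A * R) * \<bar>?z\<bar>"
    using sig_b1 assms(1) by (simp add: l fwd_Suc_vec_mat)
  also have "\<dots> \<le> b1 l (A * R) * (A * (\<Sum>i<d m. \<bar>W l i j\<bar>))"
  proof (rule mult_left_mono)
    show "\<bar>?z\<bar> \<le> A * (\<Sum>i<d m. \<bar>W l i j\<bar>)"
      using abs_vec_mat_le_norm[of "d m" "W l" "fwd \<sigma> d W x m" j] activation_norm_le[of m] assms(1)
      by (auto simp: l A_def intro: order_trans mult_right_mono sum_nonneg)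
    show "0 \<le> b1 l (A * R)"
      using b1_nonneg assms(1) act_bound_nonneg[OF X0 R, of m] R by (simp add: l A_def)
  qed
  finally show ?thesis by (simp add: l A_def)
qed

lemma perturbation_propagation:
  fixes W' :: "real \<Rightarrow> weights"
  assumes agree: "\<And>t m. a < m \<Longrightarrow> m \<le> L \<Longrightarrow> W' t m = W m"
    and base: "\<forall>\<^sub>F t in at_right 0. N (d a) (\<lambda>k. fwd \<sigma> d (W' t) x a k - fwd \<sigma> d W x a k) \<le> t * C"
    and "a \<le> b" and "b \<le> L"
  shows "\<forall>\<^sub>F t in at_right 0. N (d b) (\<lambda>k. fwd \<sigma> d (W' t) x b k - fwd \<sigma> d W x b k)
           \<le> t * (C * (\<Prod>m\<in>{Suc a..b}. lip_const X0 R m * R))"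
  using \<open>a \<le> b\<close>
proof (induction b rule: dec_induct)
  case base
  then show ?case using assms(2) by simp
next
  case (step n)
  define G where "G = (\<Prod>m\<in>{Suc a..n}. lip_const X0 R m * R)"
  define K where "K = lip_const X0 R (Suc n)"
  let ?z = "vec_mat (d n) (W (Suc n)) (fwd \<sigma> d W x n)"
  let ?z' = "\<lambda>t. vec_mat (d n) (W (Suc n)) (fwd \<sigma> d (W' t) x n)"
  have W': "W' t (Suc n) = W (Suc n)" for t
    using agree step.hyps \<open>b \<le> L\<close> by simp
  have "\<forall>\<^sub>F t in at_right 0. N (d (Suc n)) (\<lambda>k. ?z' t k - ?z k) \<le> t * (R * (C * G))"
    using step.IH
  proof eventually_elim
    case (elim t)
    have "N (d (Suc n)) (\<lambda>k. ?z' t k - ?z k)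
        = N (d (Suc n)) (vec_mat (d n) (W (Suc n)) (\<lambda>i. fwd \<sigma> d (W' t) x n i - fwd \<sigma> d W x n i))"
      by (simp add: vec_mat_diff)
    also have "\<dots> \<le> R * N (d n) (\<lambda>i. fwd \<sigma> d (W' t) x n i - fwd \<sigma> d W x n i)"
      using step.hyps \<open>b \<le> L\<close> by (intro layer_gain) simp
    also have "\<dots> \<le> R * (t * (C * G))"
      using elim R by (intro mult_left_mono) (simp_all add: G_def)
    finally show ?case by (simp add: algebra_simps)
  qed
  then have "\<forall>\<^sub>F t in at_right 0. N (d (Suc n)) (\<lambda>k. \<sigma> (Suc n) (?z' t k) - \<sigma> (Suc n) (?z k))
      \<le> K * (t * (R * (C * G)))"
    using step.hyps \<open>b \<le> L\<close> calm_at_preactivation[of "Suc n"] lip_const_pos[OF X0 R, of "Suc n"]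
    by (intro calm_layer_step) (auto simp: K_def)
  moreover have "(\<Prod>m\<in>{Suc a..Suc n}. lip_const X0 R m * R) = K * R * G"
    using step.hyps by (simp add: atLeastAtMostSuc_conv K_def G_def)
  ultimately show ?case
    by (simp add: fwd_Suc_vec_mat W' algebra_simps)
qed

lemma scale_fan_out_change:
  assumes "l < L" and "j < d l"
  shows "\<forall>\<^sub>F t in at_right 0.
    N (d (Suc l)) (\<lambda>k. fwd \<sigma> d (scale_fan_out l j (1 - t) W) x (Suc l) k - fwd \<sigma> d W x (Suc l) k)
      \<le> t * (lip_const X0 R (Suc l) * (\<bar>fwd \<sigma> d W x l j\<bar> * N (d (Suc l)) (W (Suc l) j)))"
proof -
  define c where "c = \<bar>fwd \<sigma> d W x l j\<bar> * N (d (Suc l)) (W (Suc l) j)"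
  let ?z = "vec_mat (d l) (W (Suc l)) (fwd \<sigma> d W x l)"
  let ?z' = "\<lambda>t. vec_mat (d l) (scale_fan_out l j (1 - t) W (Suc l)) (fwd \<sigma> d (scale_fan_out l j (1 - t) W) x l)"
  have z': "?z' t k - ?z k = - (t * fwd \<sigma> d W x l j * W (Suc l) j k)" for t k
    using \<open>j < d l\<close> by (simp add: fwd_scale_fan_out vec_mat_scale_fan_out)
  have "\<forall>\<^sub>F t in at_right 0. N (d (Suc l)) (\<lambda>k. ?z' t k - ?z k) \<le> t * c"
    using eventually_at_right_less[of 0]
  proof eventually_elim
    case (elim t)
    have "N (d (Suc l)) (\<lambda>k. ?z' t k - ?z k) \<le> (t * \<bar>fwd \<sigma> d W x l j\<bar>) * N (d (Suc l)) (W (Suc l) j)"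
      unfolding z' using elim by (intro norm_le_scaled) (auto simp: abs_mult)
    then show ?case by (simp add: c_def mult_ac)
  qed
  then have "\<forall>\<^sub>F t in at_right 0. N (d (Suc l)) (\<lambda>k. \<sigma> (Suc l) (?z' t k) - \<sigma> (Suc l) (?z k))
      \<le> lip_const X0 R (Suc l) * (t * c)"
    using calm_at_preactivation[of "Suc l"] lip_const_pos[OF X0 R, of "Suc l"] \<open>l < L\<close>
    by (intro calm_layer_step) auto
  then show ?thesis by (simp add: fwd_Suc_vec_mat c_def mult_ac)
qed

lemma scale_fan_in_change:
  assumes l: "l \<in> {1..<L}" and j: "j < d l"
  shows "\<forall>\<^sub>F t in at_right 0.
    N (d (Suc l)) (\<lambda>k. fwd \<sigma> d (scale_fan_in l j (1 - t) W) x (Suc l) k - fwd \<sigma> d W x (Suc l) k)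
      \<le> t * (lip_const X0 R (Suc l) * (N (d (Suc l)) (W (Suc l) j)
               * (lip_const X0 R l * \<bar>vec_mat (d (l - 1)) (W l) (fwd \<sigma> d W x (l - 1)) j\<bar>)))"
proof -
  obtain m where m: "l = Suc m" using l by (cases l) auto
  define W' where "W' t = scale_fan_in l j (1 - t) W" for t
  define z where "z = vec_mat (d m) (W l) (fwd \<sigma> d W x m) j"
  define c where "c = lip_const X0 R l * \<bar>z\<bar>"
  define r where "r = N (d (Suc l)) (W (Suc l) j)"
  \<comment> \<open>Only unit \<open>j\<close> of layer \<open>l\<close> changes, so layer \<open>l + 1\<close> sees that change times the fan-out of \<open>j\<close>.\<close>
  let ?\<Delta> = "\<lambda>t k. fwd \<sigma> d (W' t) x l k - fwd \<sigma> d W x l k"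
  have \<Delta>: "?\<Delta> t k = (if k = j then \<sigma> l ((1 - t) * z) - \<sigma> l z else 0)" for t k
    by (simp add: W'_def m z_def fwd_Suc_vec_mat fwd_scale_fan_in vec_mat_scale_fan_in)
  have "\<forall>\<^sub>F t in at_right 0. \<bar>\<sigma> l ((1 - t) * z) - \<sigma> l z\<bar> \<le> lip_const X0 R l * \<bar>(1 - t) * z - z\<bar>"
    using calm_at_preactivation[of l j] l j tendsto_one_minus_mult[of z]
    by (intro calm_at_compose) (simp_all add: m z_def)
  then have unit: "\<forall>\<^sub>F t in at_right 0. \<bar>?\<Delta> t j\<bar> \<le> t * c"
    using eventually_at_right_less[of 0]
    by eventually_elim (simp add: \<Delta> c_def abs_mult algebra_simps)
  have "\<forall>\<^sub>F t in at_right 0. N (d (Suc l))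
      (\<lambda>k. vec_mat (d l) (W (Suc l)) (fwd \<sigma> d (W' t) x l) k - vec_mat (d l) (W (Suc l)) (fwd \<sigma> d W x l) k)
      \<le> t * (r * c)"
    using unit
  proof eventually_elim
    case (elim t)
    have "N (d (Suc l)) (vec_mat (d l) (W (Suc l)) (?\<Delta> t)) \<le> \<bar>?\<Delta> t j\<bar> * r"
      using j unfolding r_def by (intro norm_vec_mat_single_entry) (simp_all add: \<Delta>)
    also have "\<dots> \<le> t * c * r"
      using elim by (intro mult_right_mono) (simp_all add: r_def norm_nonneg)
    finally show ?case by (simp add: vec_mat_diff mult_ac)
  qed
  then have "\<forall>\<^sub>F t in at_right 0. N (d (Suc l)) (\<lambda>k. \<sigma> (Suc l) (vec_mat (d l) (W (Suc l)) (fwd \<sigma> d (W' t) x l) k)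
      - \<sigma> (Suc l) (vec_mat (d l) (W (Suc l)) (fwd \<sigma> d W x l) k)) \<le> lip_const X0 R (Suc l) * (t * (r * c))"
    using calm_at_preactivation[of "Suc l"] lip_const_pos[OF X0 R, of "Suc l"] l
    by (intro calm_layer_step) auto
  moreover have "W' t (Suc l) = W (Suc l)" for t
    by (simp add: W'_def scale_fan_in_def)
  ultimately show ?thesis
    by (simp add: fwd_Suc_vec_mat W'_def c_def r_def z_def m mult_ac)
qed

end

end

section \<open>Loss and local minimality\<close>

lemma out_idx_bij: "bij_betw (out_idx :: nat \<Rightarrow> 'o::finite) {..<CARD('o)} UNIV"
proof -
  have "\<exists>f::nat \<Rightarrow> 'o. bij_betw f {..<CARD('o)} UNIV"
    using ex_bij_betw_nat_finite[of "UNIV :: 'o set"] by (auto simp: atLeast0LessThan)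
  then show ?thesis unfolding out_idx_def by (rule someI_ex)
qed

lemma sum_abs_to_outvec_diff:
  "(\<Sum>k\<in>UNIV. \<bar>(to_outvec v - to_outvec w :: real^'o::finite) $ k\<bar>) = (\<Sum>n<CARD('o). \<bar>v n - w n\<bar>)"
  unfolding to_outvec_def
  using sum.reindex_bij_betw[OF bij_betw_inv_into[OF out_idx_bij], of "\<lambda>n. \<bar>v n - w n\<bar>"] by simp

lemma has_derivative_imp_eventually_le:
  fixes g :: "real^'n \<Rightarrow> real"
  assumes deriv: "(g has_derivative g') (at v)" and partials: "\<And>k. \<bar>g' (axis k 1)\<bar> \<le> G"
  shows "\<forall>\<^sub>F w in nhds v. g w - g v \<le> (G + 1) * (\<Sum>k\<in>UNIV. \<bar>(w - v) $ k\<bar>)"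
proof -
  have lin: "linear g'" using deriv by (rule has_derivative_linear)
  have g': "\<bar>g' h\<bar> \<le> G * (\<Sum>k\<in>UNIV. \<bar>h $ k\<bar>)" for h
  proof -
    have "g' h = g' (\<Sum>k\<in>UNIV. h $ k *s axis k 1)"
      by (simp add: basis_expansion)
    also have "\<dots> = (\<Sum>k\<in>UNIV. h $ k * g' (axis k 1))"
      using lin by (simp add: linear_sum linear_scale scalar_mult_eq_scaleR)
    finally have "g' h = (\<Sum>k\<in>UNIV. h $ k * g' (axis k 1))" .
    then have "\<bar>g' h\<bar> \<le> (\<Sum>k\<in>UNIV. \<bar>h $ k\<bar> * \<bar>g' (axis k 1)\<bar>)"
      by (simp add: sum_abs[THEN order_trans] abs_mult)
    also have "\<dots> \<le> (\<Sum>k\<in>UNIV. \<bar>h $ k\<bar> * G)"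
      by (intro sum_mono mult_left_mono partials) auto
    finally show ?thesis by (simp add: sum_distrib_left mult.commute)
  qed
  obtain \<delta> where "\<delta> > 0"
    and \<delta>: "\<And>w. norm (w - v) < \<delta> \<Longrightarrow> norm (g w - g v - g' (w - v)) \<le> 1 * norm (w - v)"
    using deriv unfolding has_derivative_at_alt by (meson zero_less_one)
  show ?thesis
    unfolding eventually_nhds_metric
  proof (intro exI[of _ \<delta>] conjI allI impI)
    fix w assume "dist w v < \<delta>"
    then have "g w - g v \<le> \<bar>g' (w - v)\<bar> + norm (w - v)"
      using \<delta>[of w] abs_ge_self[of "g' (w - v)"] by (auto simp: dist_norm abs_le_iff)
    also have "\<dots> \<le> G * (\<Sum>k\<in>UNIV. \<bar>(w - v) $ k\<bar>) + (\<Sum>k\<in>UNIV. \<bar>(w - v) $ k\<bar>)"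
      using g' norm_le_l1_cart by (rule add_mono)
    finally show "g w - g v \<le> (G + 1) * (\<Sum>k\<in>UNIV. \<bar>(w - v) $ k\<bar>)"
      by (simp add: algebra_simps)
  qed (fact \<open>\<delta> > 0\<close>)
qed

lemma is_local_min_eventually_le:
  fixes W' :: "'a \<Rightarrow> weights"
  assumes min: "is_local_min E L d W" and conv: "\<And>m i k. ((\<lambda>t. W' t m i k) \<longlongrightarrow> W m i k) F"
  shows "\<forall>\<^sub>F t in F. E d W \<le> E d (W' t)"
proof -
  obtain \<epsilon> where "\<epsilon> > 0" and \<epsilon>: "\<And>V. (\<forall>m\<in>{1..L}. \<forall>i<d (m - 1). \<forall>k<d m. \<bar>V m i k - W m i k\<bar> < \<epsilon>)
      \<Longrightarrow> E d W \<le> E d V"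
    using min unfolding is_local_min_def by blast
  have "\<forall>\<^sub>F t in F. \<forall>m\<in>{1..L}. \<forall>i\<in>{..<d (m - 1)}. \<forall>k\<in>{..<d m}. \<bar>W' t m i k - W m i k\<bar> < \<epsilon>"
    using conv[unfolded tendsto_iff dist_real_def] \<open>\<epsilon> > 0\<close>
    by (intro eventually_ball_finite ballI) auto
  then show ?thesis
    by eventually_elim (auto intro: \<epsilon>)
qed

lemma local_min_first_order:
  fixes W' :: "real \<Rightarrow> weights" and e :: "real^'o::finite \<Rightarrow> 'y \<Rightarrow> real"
  assumes finD: "finite D" and min: "is_local_min (energy \<sigma> e D \<Omega> L) L d W"
    and conv: "\<And>m i k. ((\<lambda>t. W' t m i k) \<longlongrightarrow> W m i k) (at_right 0)"
    and reg: "\<forall>\<^sub>F t in at_right 0. \<Omega> d (W' t) \<le> \<Omega> d W - t * c"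
    and loss: "\<And>x y. (x, y) \<in> D \<Longrightarrow>
      \<forall>\<^sub>F t in at_right 0. e (net \<sigma> L d (W' t) x) y - e (net \<sigma> L d W x) y \<le> t * q"
    and "0 < c"
  shows "c \<le> q"
proof -
  define Ls where "Ls V = (\<Sum>(x, y)\<in>D. e (net \<sigma> L d V x) y)" for V
  have "\<forall>\<^sub>F t in at_right 0. \<forall>(x, y)\<in>D. e (net \<sigma> L d (W' t) x) y - e (net \<sigma> L d W x) y \<le> t * q"
    using loss by (intro eventually_ball_finite[OF finD]) auto
  with reg eventually_at_right_less[of 0] is_local_min_eventually_le[OF min conv]
  have "\<forall>\<^sub>F t in at_right 0. 0 < t \<and> energy \<sigma> e D \<Omega> L d W \<le> energy \<sigma> e D \<Omega> L d (W' t)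
      \<and> \<Omega> d (W' t) \<le> \<Omega> d W - t * c \<and> Ls (W' t) - Ls W \<le> real (card D) * (t * q)"
  proof eventually_elim
    case (elim t)
    have "Ls (W' t) - Ls W = (\<Sum>(x, y)\<in>D. e (net \<sigma> L d (W' t) x) y - e (net \<sigma> L d W x) y)"
      by (simp add: Ls_def sum_subtractf case_prod_unfold)
    also have "\<dots> \<le> (\<Sum>(x, y)\<in>D. t * q)"
      using elim(4) by (intro sum_mono) auto
    finally show ?case using elim by simp
  qed
  then obtain t where "0 < t" and le: "energy \<sigma> e D \<Omega> L d W \<le> energy \<sigma> e D \<Omega> L d (W' t)"
    and reg_t: "\<Omega> d (W' t) \<le> \<Omega> d W - t * c" and loss_t: "Ls (W' t) - Ls W \<le> real (card D) * (t * q)"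
    using eventually_happens'[OF trivial_limit_at_right_real] by blast
  have tc: "t * c \<le> (Ls (W' t) - Ls W) / real (card D)"
    using le reg_t by (simp add: energy_def Ls_def diff_divide_distrib)
  \<comment> \<open>\<open>energy\<close> divides by \<open>card D\<close>, and \<open>x / 0 = 0\<close>: for empty \<open>D\<close> the regulariser alone would drop.\<close>
  have "card D \<noteq> 0"
  proof
    assume "card D = 0"
    with tc have "t * c \<le> 0" by simp
    with \<open>0 < t\<close> \<open>0 < c\<close> show False by (simp add: mult_le_0_iff)
  qed
  with tc loss_t have "real (card D) * (t * c) \<le> real (card D) * (t * q)"
    by (simp add: le_divide_eq mult_ac)
  then show ?thesis using \<open>0 < t\<close> \<open>card D \<noteq> 0\<close> by simp
qed

section \<open>Counting units\<close>

definition width_bound :: "real \<Rightarrow> real \<Rightarrow> real \<Rightarrow> real \<Rightarrow> nat \<Rightarrow> real" where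
  "width_bound K R lam p n = real n * R powr p * (K * real n) powr p / lam powr p"

lemma mono_width_bound:
  assumes "0 \<le> K" and "0 \<le> p"
  shows "mono (width_bound K R lam p)"
proof
  fix m n :: nat assume "m \<le> n"
  then have "real m * R powr p * (K * real m) powr p \<le> real n * R powr p * (K * real n) powr p"
    using assms by (intro mult_right_mono mult_mono powr_mono2) auto
  then show "width_bound K R lam p m \<le> width_bound K R lam p n"
    unfolding width_bound_def by (rule divide_right_mono) simp
qed

lemma exists_large_summand:
  fixes a :: "nat \<Rightarrow> real"
  assumes "lam \<le> K * (\<Sum>i<n. \<bar>a i\<bar>)" and "0 < lam"
  shows "\<exists>i<n. lam \<le> K * real n * \<bar>a i\<bar>"
proof (rule ccontr)
  assume "\<not> ?thesis"
  then have small: "\<And>i. i < n \<Longrightarrow> K * real n * \<bar>a i\<bar> < lam" by force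
  have "n \<noteq> 0"
    using assms by (intro notI) simp
  then have "(\<Sum>i<n. K * real n * \<bar>a i\<bar>) < (\<Sum>i<n. lam)"
    using small by (intro sum_strict_mono) auto
  then have "real n * (K * (\<Sum>i<n. \<bar>a i\<bar>)) < real n * lam"
    by (simp add: sum_distrib_left mult_ac)
  then show False using assms(1) \<open>n \<noteq> 0\<close> by simp
qed

text \<open>By pigeonhole each of the \<open>N\<close> columns has an entry of modulus at least \<open>lam / (K n)\<close>; comparing
  with the row \<open>p\<close>-norms, the \<open>p\<close>-th powers of all entries sum to at least \<open>N (lam / (K n))\<^sup>p\<close> and at
  most \<open>n R\<^sup>p\<close>.\<close>

lemma width_le_width_bound:
  fixes a :: "nat \<Rightarrow> nat \<Rightarrow> real"
  assumes cols: "\<And>j. j < N \<Longrightarrow> lam \<le> K * (\<Sum>i<n. \<bar>a i j\<bar>)"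
    and rows: "\<And>i. i < n \<Longrightarrow> pnorm p N (a i) \<le> R"
    and "0 < lam" and "0 \<le> K" and "0 < p"
  shows "real N \<le> width_bound K R lam p n"
proof -
  have row_sums: "(\<Sum>j<N. \<bar>a i j\<bar> powr p) \<le> R powr p" if "i < n" for i
  proof -
    have "(\<Sum>j<N. \<bar>a i j\<bar> powr p) = pnorm p N (a i) powr p"
      using \<open>0 < p\<close> by (simp add: pnorm_def powr_powr sum_nonneg)
    also have "\<dots> \<le> R powr p"
      using rows[OF that] \<open>0 < p\<close> by (intro powr_mono2) (auto simp: pnorm_nonneg)
    finally show ?thesis .
  qed
  have column: "lam powr p \<le> (K * real n) powr p * (\<Sum>i<n. \<bar>a i j\<bar> powr p)" if j: "j < N" for j
  proof -
    obtain i where i: "i < n" "lam \<le> K * real n * \<bar>a i j\<bar>"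
      using exists_large_summand[OF cols[OF j] \<open>0 < lam\<close>] by blast
    have "lam powr p \<le> (K * real n * \<bar>a i j\<bar>) powr p"
      using i \<open>0 < lam\<close> \<open>0 < p\<close> by (intro powr_mono2) auto
    also have "\<dots> = (K * real n) powr p * \<bar>a i j\<bar> powr p"
      using \<open>0 \<le> K\<close> by (simp add: powr_mult)
    also have "\<dots> \<le> (K * real n) powr p * (\<Sum>i<n. \<bar>a i j\<bar> powr p)"
      using i by (intro mult_left_mono member_le_sum) auto
    finally show ?thesis .
  qed
  have "real N * lam powr p \<le> (\<Sum>j<N. (K * real n) powr p * (\<Sum>i<n. \<bar>a i j\<bar> powr p))"
    using sum_mono[of "{..<N}", OF column] by simp
  also have "\<dots> = (K * real n) powr p * (\<Sum>i<n. \<Sum>j<N. \<bar>a i j\<bar> powr p)"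
    by (simp add: sum_distrib_left sum.swap[of _ "{..<N}"])
  also have "\<dots> \<le> (K * real n) powr p * (\<Sum>i<n. R powr p)"
    using row_sums by (intro mult_left_mono sum_mono) auto
  finally show ?thesis
    using \<open>0 < lam\<close> by (simp add: width_bound_def le_divide_eq mult_ac)
qed

lemma bounded_by_monotone_recurrence:
  fixes P :: "(nat \<Rightarrow> nat) \<Rightarrow> bool" and F :: "nat \<Rightarrow> nat \<Rightarrow> real"
  assumes init: "\<And>d. P d \<Longrightarrow> d 0 \<le> M0"
    and step: "\<And>d l. P d \<Longrightarrow> l < n \<Longrightarrow> real (d (Suc l)) \<le> F l (d l)"
    and mono: "\<And>l. l < n \<Longrightarrow> mono (F l)"
  shows "\<exists>M. \<forall>d. P d \<longrightarrow> (\<forall>l\<le>n. d l \<le> M)"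
proof -
  have "\<exists>b. \<forall>d. P d \<longrightarrow> d l \<le> b" if "l \<le> n" for l
    using that
  proof (induction l)
    case 0
    then show ?case using init by blast
  next
    case (Suc l)
    then obtain b where b: "\<forall>d. P d \<longrightarrow> d l \<le> b" by auto
    have "d (Suc l) \<le> nat \<lceil>F l b\<rceil>" if "P d" for d
    proof -
      have "real (d (Suc l)) \<le> F l (d l)"
        using step that Suc.prems by simp
      also have "\<dots> \<le> F l b"
        using mono[of l] b that Suc.prems by (simp add: monoD)
      finally show ?thesis by linarith
    qed
    then show ?case by blast
  qed
  then obtain b where b: "\<And>l d. l \<le> n \<Longrightarrow> P d \<Longrightarrow> d l \<le> b l" by metis
  have "d l \<le> (\<Sum>l\<le>n. b l)" if "P d" and "l \<le> n" for d l
    using b[OF that(2,1)] member_le_sum[of l "{..n}" b] that(2) by simp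
  then show ?thesis by blast
qed

lemma is_proper_imp_fans_nonzero:
  assumes "is_proper L d W" and "l \<in> {1..<L}" and "j < d l"
  shows "(\<exists>i<d (l - 1). W l i j \<noteq> 0) \<and> (\<exists>k<d (Suc l). W (Suc l) j k \<noteq> 0)"
proof -
  let ?U = "{j. j < d l \<and> (\<exists>i<d (l - 1). W l i j \<noteq> 0) \<and> (\<exists>k<d (Suc l). W (Suc l) j k \<noteq> 0)}"
  have "card ?U = card {..<d l}"
    using assms(1,2) by (simp add: is_proper_def proper_dim_def)
  then have "?U = {..<d l}"
    by (intro card_subset_eq) auto
  then show ?thesis using assms(3) by blast
qed

section \<open>Bounding the widths\<close>

locale training_problem = activations \<sigma> L b1 b2
  for \<sigma> :: "nat \<Rightarrow> real \<Rightarrow> real" and L :: nat and b1 b2 :: "nat \<Rightarrow> real \<Rightarrow> real" +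
  fixes e :: "real^'o::finite \<Rightarrow> 'y \<Rightarrow> real" and b3 :: "real \<Rightarrow> real"
    and D :: "((nat \<Rightarrow> real) \<times> 'y) set"
  assumes finD: "finite D"
    and e_nonneg: "\<forall>v y. e v y \<ge> 0"
    and e_diff: "\<forall>v y. (\<lambda>w. e w y) differentiable (at v)"
    and b3_nonneg: "\<forall>S\<ge>0. b3 S \<ge> 0"
    and e_grad: "\<forall>S v y De. e v y \<le> S \<longrightarrow> ((\<lambda>w. e w y) has_derivative De) (at v) \<longrightarrow>
         (\<forall>k. \<bar>De (axis k 1)\<bar> \<le> b3 S)"
begin

lemma loss_increase_le:
  assumes "e (to_outvec u) y \<le> S"
    and small: "\<forall>\<^sub>F t in at_right 0. (\<Sum>n<CARD('o). \<bar>u' t n - u n\<bar>) \<le> t * C"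
  shows "\<forall>\<^sub>F t in at_right 0. e (to_outvec (u' t)) y - e (to_outvec u) y \<le> (b3 S + 1) * (t * C)"
proof -
  let ?v = "to_outvec u :: real^'o"
  obtain g' where g': "((\<lambda>w. e w y) has_derivative g') (at ?v)"
    using e_diff unfolding differentiable_def by blast
  have partials: "\<bar>g' (axis k 1)\<bar> \<le> b3 S" for k
    using e_grad assms(1) g' by blast
  have "0 \<le> b3 S + 1"
    using order_trans[OF abs_ge_zero partials[of undefined]] by simp
  have dist: "\<forall>\<^sub>F t in at_right 0. (\<Sum>k\<in>UNIV. \<bar>(to_outvec (u' t) - ?v) $ k\<bar>) \<le> t * C"
    using small by (simp only: sum_abs_to_outvec_diff)
  have "((\<lambda>t. to_outvec (u' t) - ?v) \<longlongrightarrow> 0) (at_right 0)"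
  proof (rule Lim_null_comparison)
    show "((\<lambda>t. t * C) \<longlongrightarrow> 0) (at_right (0::real))"
      by (rule tendsto_mult_left_zero) (rule tendsto_ident_at)
    show "\<forall>\<^sub>F t in at_right 0. norm (to_outvec (u' t) - ?v) \<le> t * C"
      using dist by eventually_elim (use norm_le_l1_cart order_trans in blast)
  qed
  then have "((\<lambda>t. to_outvec (u' t)) \<longlongrightarrow> ?v) (at_right 0)"
    by (rule LIM_zero_cancel)
  with has_derivative_imp_eventually_le[OF g' partials]
  have "\<forall>\<^sub>F t in at_right 0. e (to_outvec (u' t)) y - e ?v y
      \<le> (b3 S + 1) * (\<Sum>k\<in>UNIV. \<bar>(to_outvec (u' t) - ?v) $ k\<bar>)"
    by (rule eventually_compose_filterlim)
  with dist show ?thesis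
  proof eventually_elim
    case (elim t)
    then show ?case
      using mult_left_mono[OF elim(1) \<open>0 \<le> b3 S + 1\<close>] by linarith
  qed
qed

lemma output_loss_perturbation:
  fixes W' :: "real \<Rightarrow> weights"
  assumes "absolute_norm N" and gain: "layer_gains_le N L d W R"
    and input: "N (d 0) x \<le> X0" and "0 \<le> X0" and "0 \<le> R"
    and dL: "d L = CARD('o)" and loss: "e (net \<sigma> L d W x) y \<le> S"
    and agree: "\<And>t m. a < m \<Longrightarrow> m \<le> L \<Longrightarrow> W' t m = W m" and "a \<le> L"
    and base: "\<forall>\<^sub>F t in at_right 0. N (d a) (\<lambda>k. fwd \<sigma> d (W' t) x a k - fwd \<sigma> d W x a k) \<le> t * C"
  shows "\<forall>\<^sub>F t in at_right 0. e (net \<sigma> L d (W' t) x) y - e (net \<sigma> L d W x) y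
           \<le> t * ((b3 S + 1) * real CARD('o) * C * tail_gain X0 R a)"
proof -
  interpret normed_network \<sigma> L b1 b2 N
    using \<open>absolute_norm N\<close> by intro_locales
  let ?\<Delta> = "\<lambda>t k. fwd \<sigma> d (W' t) x L k - fwd \<sigma> d W x L k"
  have "\<forall>\<^sub>F t in at_right 0. N (d L) (?\<Delta> t) \<le> t * (C * tail_gain X0 R a)"
    using perturbation_propagation[OF gain input \<open>0 \<le> X0\<close> \<open>0 \<le> R\<close> agree base \<open>a \<le> L\<close>]
    by (simp add: tail_gain_def)
  then have "\<forall>\<^sub>F t in at_right 0. (\<Sum>n<CARD('o). \<bar>?\<Delta> t n\<bar>) \<le> t * (real CARD('o) * (C * tail_gain X0 R a))"
  proof eventually_elim
    case (elim t)
    have "(\<Sum>n<CARD('o). \<bar>?\<Delta> t n\<bar>) \<le> (\<Sum>n<CARD('o). N (d L) (?\<Delta> t))"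
      using dL by (intro sum_mono abs_le_norm) simp
    also have "\<dots> \<le> real CARD('o) * (t * (C * tail_gain X0 R a))"
      using elim by simp
    finally show ?case by (simp add: mult_ac)
  qed
  from loss_increase_le[OF loss[unfolded net_def] this]
  show ?thesis by (simp add: net_def mult_ac)
qed

definition fan_in_coeff :: "real \<Rightarrow> real \<Rightarrow> real \<Rightarrow> nat \<Rightarrow> real" where
  "fan_in_coeff S X0 R l = (b3 S + 1) * lip_const X0 R (Suc l) * tail_gain X0 R (Suc l)
     * b1 l (act_bound b1 X0 R (l - 1) * R) * act_bound b1 X0 R (l - 1)"

definition fan_out_coeff :: "real \<Rightarrow> real \<Rightarrow> real \<Rightarrow> nat \<Rightarrow> real" where
  "fan_out_coeff S X0 R l = (b3 S + 1) * lip_const X0 R (Suc l) * tail_gain X0 R (Suc l)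
     * lip_const X0 R l * act_bound b1 X0 R (l - 1)"

lemma fan_coeffs_nonneg:
  assumes "0 \<le> S" and "0 \<le> X0" and "0 \<le> R" and "l \<in> {1..<L}"
  shows "0 \<le> fan_in_coeff S X0 R l" and "0 \<le> fan_out_coeff S X0 R l"
proof -
  have "0 \<le> b3 S + 1" using b3_nonneg assms(1) by (simp add: add_nonneg_nonneg)
  moreover have "0 \<le> act_bound b1 X0 R (l - 1)"
    using assms by (intro act_bound_nonneg) auto
  moreover have "0 \<le> b1 l (act_bound b1 X0 R (l - 1) * R)"
    using b1_nonneg assms(3,4) calculation(2) by simp
  moreover have "0 < lip_const X0 R l" and "0 < lip_const X0 R (Suc l)"
    using assms by (auto intro!: lip_const_pos)
  moreover have "0 \<le> tail_gain X0 R (Suc l)"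
    using assms by (intro tail_gain_nonneg)
  ultimately show "0 \<le> fan_in_coeff S X0 R l" and "0 \<le> fan_out_coeff S X0 R l"
    unfolding fan_in_coeff_def fan_out_coeff_def by simp_all
qed

lemma scale_fan_out_loss_le:
  assumes "0 < p" and gain: "layer_gains_le max_norm L d W R"
    and input: "max_norm (d 0) x \<le> X0" and X0: "0 \<le> X0" and R: "0 \<le> R"
    and dL: "d L = CARD('o)" and loss: "e (net \<sigma> L d W x) y \<le> S" and "0 \<le> S"
    and l: "l \<in> {1..<L}" and j: "j < d l"
  shows "\<forall>\<^sub>F t in at_right 0. e (net \<sigma> L d (scale_fan_out l j (1 - t) W) x) y - e (net \<sigma> L d W x) y
    \<le> t * (real CARD('o) * fan_in_coeff S X0 R l * (\<Sum>i<d (l - 1). \<bar>W l i j\<bar>)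
            * pnorm p (d (Suc l)) (W (Suc l) j))"
proof -
  interpret max_norm_net: normed_network \<sigma> L b1 b2 max_norm
    using max_norm.absolute_norm_axioms by intro_locales
  define A where "A = act_bound b1 X0 R (l - 1)"
  define c0 where "c0 = (b3 S + 1) * real CARD('o) * lip_const X0 R (Suc l) * tail_gain X0 R (Suc l)"
  have act: "\<bar>fwd \<sigma> d W x l j\<bar> \<le> b1 l (A * R) * (A * (\<Sum>i<d (l - 1). \<bar>W l i j\<bar>))"
    using max_norm_net.abs_activation_le_fan_in[OF gain input X0 R, of l j] l j by (simp add: A_def)
  have "0 \<le> c0"
    using b3_nonneg \<open>0 \<le> S\<close> lip_const_pos[OF X0 R, of "Suc l"] tail_gain_nonneg[OF X0 R, of "Suc l"] l
    by (simp add: c0_def)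
  then have "c0 * (\<bar>fwd \<sigma> d W x l j\<bar> * max_norm (d (Suc l)) (W (Suc l) j))
      \<le> c0 * (b1 l (A * R) * (A * (\<Sum>i<d (l - 1). \<bar>W l i j\<bar>)) * pnorm p (d (Suc l)) (W (Suc l) j))"
    using act order_trans[OF abs_ge_zero act] max_norm_le_pnorm[OF \<open>0 < p\<close>]
    by (intro mult_left_mono mult_mono) (simp_all add: max_norm_nonneg)
  also have "\<dots> = real CARD('o) * fan_in_coeff S X0 R l * (\<Sum>i<d (l - 1). \<bar>W l i j\<bar>)
      * pnorm p (d (Suc l)) (W (Suc l) j)"
    by (simp add: fan_in_coeff_def c0_def A_def mult_ac)
  finally have coeff: "c0 * (\<bar>fwd \<sigma> d W x l j\<bar> * max_norm (d (Suc l)) (W (Suc l) j))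
      \<le> real CARD('o) * fan_in_coeff S X0 R l * (\<Sum>i<d (l - 1). \<bar>W l i j\<bar>) * pnorm p (d (Suc l)) (W (Suc l) j)" .
  have "\<forall>\<^sub>F t in at_right 0. e (net \<sigma> L d (scale_fan_out l j (1 - t) W) x) y - e (net \<sigma> L d W x) y
      \<le> t * (c0 * (\<bar>fwd \<sigma> d W x l j\<bar> * max_norm (d (Suc l)) (W (Suc l) j)))"
  proof -
    have "scale_fan_out l j (1 - t) W m = W m" if "Suc l < m" for t m
      using that by (simp add: scale_fan_out_def)
    moreover have "Suc l \<le> L" using l by simp
    ultimately show ?thesis
      using output_loss_perturbation[OF max_norm.absolute_norm_axioms gain input X0 R dL loss _ _
          max_norm_net.scale_fan_out_change[OF gain input X0 R]] l j
      by (simp add: c0_def mult_ac)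
  qed
  with eventually_at_right_less[of 0] show ?thesis
    by eventually_elim (use coeff in \<open>meson mult_left_mono less_imp_le order_trans\<close>)
qed

lemma scale_fan_in_loss_le:
  assumes "0 < p" and gain: "layer_gains_le sum_norm L d W R"
    and input: "sum_norm (d 0) x \<le> X0" and X0: "0 \<le> X0" and R: "0 \<le> R"
    and dL: "d L = CARD('o)" and loss: "e (net \<sigma> L d W x) y \<le> S" and "0 \<le> S"
    and l: "l \<in> {1..<L}" and j: "j < d l"
  shows "\<forall>\<^sub>F t in at_right 0. e (net \<sigma> L d (scale_fan_in l j (1 - t) W) x) y - e (net \<sigma> L d W x) y
    \<le> t * (real CARD('o) * fan_out_coeff S X0 R l * (\<Sum>k<d (Suc l). \<bar>W (Suc l) j k\<bar>)
            * pnorm p (d (l - 1)) (\<lambda>i. W l i j))"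
proof -
  interpret sum_norm_net: normed_network \<sigma> L b1 b2 sum_norm
    using sum_norm.absolute_norm_axioms by intro_locales
  define A where "A = act_bound b1 X0 R (l - 1)"
  define P where "P = pnorm p (d (l - 1)) (\<lambda>i. W l i j)"
  define V where "V = (\<Sum>k<d (Suc l). \<bar>W (Suc l) j k\<bar>)"
  define c0 where "c0 = (b3 S + 1) * real CARD('o) * lip_const X0 R (Suc l) * tail_gain X0 R (Suc l)"
  let ?z = "vec_mat (d (l - 1)) (W l) (fwd \<sigma> d W x (l - 1)) j"
  have "\<bar>?z\<bar> \<le> sum_norm (d (l - 1)) (fwd \<sigma> d W x (l - 1)) * P"
    unfolding P_def using \<open>0 < p\<close> by (rule abs_vec_mat_le_sum_norm_pnorm)
  also have "\<dots> \<le> A * P"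
    using sum_norm_net.activation_norm_le[OF gain input X0 R, of "l - 1"] l
    by (auto simp: A_def P_def pnorm_nonneg intro: mult_right_mono)
  finally have z: "\<bar>?z\<bar> \<le> A * P" .
  have "0 \<le> c0"
    using b3_nonneg \<open>0 \<le> S\<close> lip_const_pos[OF X0 R, of "Suc l"] tail_gain_nonneg[OF X0 R, of "Suc l"] l
    by (simp add: c0_def)
  then have "c0 * (V * (lip_const X0 R l * \<bar>?z\<bar>)) \<le> c0 * (V * (lip_const X0 R l * (A * P)))"
    using z lip_const_pos[OF X0 R, of l] l by (intro mult_left_mono) (auto simp: V_def sum_nonneg)
  also have "\<dots> = real CARD('o) * fan_out_coeff S X0 R l * V * P"
    by (simp add: fan_out_coeff_def c0_def A_def mult_ac)
  finally have coeff: "c0 * (V * (lip_const X0 R l * \<bar>?z\<bar>)) \<le> real CARD('o) * fan_out_coeff S X0 R l * V * P" .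
  have "\<forall>\<^sub>F t in at_right 0. e (net \<sigma> L d (scale_fan_in l j (1 - t) W) x) y - e (net \<sigma> L d W x) y
      \<le> t * (c0 * (V * (lip_const X0 R l * \<bar>?z\<bar>)))"
  proof -
    have "scale_fan_in l j (1 - t) W m = W m" if "Suc l < m" for t m
      using that by (simp add: scale_fan_in_def)
    moreover have "Suc l \<le> L" using l by simp
    ultimately show ?thesis
      using output_loss_perturbation[OF sum_norm.absolute_norm_axioms gain input X0 R dL loss _ _
          sum_norm_net.scale_fan_in_change[OF gain input X0 R l j]]
      by (simp add: c0_def V_def sum_norm_def mult_ac)
  qed
  with eventually_at_right_less[of 0] show ?thesis
    unfolding V_def[symmetric] P_def[symmetric]
    by eventually_elim (use coeff in \<open>meson mult_left_mono less_imp_le order_trans\<close>)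
qed

lemma fan_in_lower_bound:
  assumes "0 < lam" and "0 < p"
    and min: "is_local_min (energy \<sigma> e D (Omega_out lam p L) L) L d W"
    and gain: "layer_gains_le max_norm L d W R"
    and input: "\<forall>(x, y)\<in>D. max_norm (d 0) x \<le> X0" and X0: "0 \<le> X0" and R: "0 \<le> R"
    and loss: "\<forall>(x, y)\<in>D. e (net \<sigma> L d W x) y \<le> S" and "0 \<le> S" and dL: "d L = CARD('o)"
    and l: "l \<in> {1..<L}" and j: "j < d l" and fan_out: "k < d (Suc l)" "W (Suc l) j k \<noteq> 0"
  shows "lam \<le> real CARD('o) * fan_in_coeff S X0 R l * (\<Sum>i<d (l - 1). \<bar>W l i j\<bar>)"
proof -
  define P where "P = pnorm p (d (Suc l)) (W (Suc l) j)"
  have "0 < P"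
    using abs_le_pnorm[OF \<open>0 < p\<close> fan_out(1), of "W (Suc l) j"] fan_out(2) by (simp add: P_def)
  have reg: "\<forall>\<^sub>F t in at_right 0. Omega_out lam p L d (scale_fan_out l j (1 - t) W)
      \<le> Omega_out lam p L d W - t * (lam * P)"
    using eventually_at_right_0_less_1
    by eventually_elim (use l j \<open>0 < p\<close> in \<open>simp add: Omega_out_scale_fan_out P_def\<close>)
  have increase: "\<forall>\<^sub>F t in at_right 0. e (net \<sigma> L d (scale_fan_out l j (1 - t) W) x) y - e (net \<sigma> L d W x) y
      \<le> t * (real CARD('o) * fan_in_coeff S X0 R l * (\<Sum>i<d (l - 1). \<bar>W l i j\<bar>) * P)"
    if "(x, y) \<in> D" for x y
  proof -
    have "max_norm (d 0) x \<le> X0" and "e (net \<sigma> L d W x) y \<le> S"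
      using input loss that by auto
    from scale_fan_out_loss_le[OF \<open>0 < p\<close> gain this(1) X0 R dL this(2) \<open>0 \<le> S\<close> l j]
    show ?thesis by (simp add: P_def)
  qed
  have "lam * P \<le> real CARD('o) * fan_in_coeff S X0 R l * (\<Sum>i<d (l - 1). \<bar>W l i j\<bar>) * P"
    by (rule local_min_first_order[OF finD min tendsto_scale_fan_out[of l j W] reg increase
          mult_pos_pos[OF \<open>0 < lam\<close> \<open>0 < P\<close>]])
  then show ?thesis using \<open>0 < P\<close> by simp
qed

lemma fan_out_lower_bound:
  assumes "0 < lam" and "0 < p"
    and min: "is_local_min (energy \<sigma> e D (Omega_in lam p L) L) L d W"
    and gain: "layer_gains_le sum_norm L d W R"
    and input: "\<forall>(x, y)\<in>D. sum_norm (d 0) x \<le> X0" and X0: "0 \<le> X0" and R: "0 \<le> R"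
    and loss: "\<forall>(x, y)\<in>D. e (net \<sigma> L d W x) y \<le> S" and "0 \<le> S" and dL: "d L = CARD('o)"
    and l: "l \<in> {1..<L}" and j: "j < d l" and fan_in: "i < d (l - 1)" "W l i j \<noteq> 0"
  shows "lam \<le> real CARD('o) * fan_out_coeff S X0 R l * (\<Sum>k<d (Suc l). \<bar>W (Suc l) j k\<bar>)"
proof -
  define P where "P = pnorm p (d (l - 1)) (\<lambda>i. W l i j)"
  have "0 < P"
    using abs_le_pnorm[OF \<open>0 < p\<close> fan_in(1), of "\<lambda>i. W l i j"] fan_in(2) by (simp add: P_def)
  have reg: "\<forall>\<^sub>F t in at_right 0. Omega_in lam p L d (scale_fan_in l j (1 - t) W)
      \<le> Omega_in lam p L d W - t * (lam * P)"
    using eventually_at_right_0_less_1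
    by eventually_elim (use l j \<open>0 < p\<close> in \<open>simp add: Omega_in_scale_fan_in P_def\<close>)
  have increase: "\<forall>\<^sub>F t in at_right 0. e (net \<sigma> L d (scale_fan_in l j (1 - t) W) x) y - e (net \<sigma> L d W x) y
      \<le> t * (real CARD('o) * fan_out_coeff S X0 R l * (\<Sum>k<d (Suc l). \<bar>W (Suc l) j k\<bar>) * P)"
    if "(x, y) \<in> D" for x y
  proof -
    have "sum_norm (d 0) x \<le> X0" and "e (net \<sigma> L d W x) y \<le> S"
      using input loss that by auto
    from scale_fan_in_loss_le[OF \<open>0 < p\<close> gain this(1) X0 R dL this(2) \<open>0 \<le> S\<close> l j]
    show ?thesis by (simp add: P_def)
  qed
  have "lam * P \<le> real CARD('o) * fan_out_coeff S X0 R l * (\<Sum>k<d (Suc l). \<bar>W (Suc l) j k\<bar>) * P"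
    by (rule local_min_first_order[OF finD min tendsto_scale_fan_in[of l j W] reg increase
          mult_pos_pos[OF \<open>0 < lam\<close> \<open>0 < P\<close>]])
  then show ?thesis using \<open>0 < P\<close> by simp
qed

definition loss_bound :: "real \<Rightarrow> real" where
  "loss_bound B = real (card D) * max B 0"

definition input_bound :: "nat \<Rightarrow> real" where
  "input_bound n = (\<Sum>(x, y)\<in>D. sum_norm n x)"

definition admissible ::
  "((nat \<Rightarrow> nat) \<Rightarrow> weights \<Rightarrow> real) \<Rightarrow> nat \<Rightarrow> real \<Rightarrow> (nat \<Rightarrow> nat) \<Rightarrow> weights \<Rightarrow> bool" where
  "admissible \<Omega> d0 B d W \<longleftrightarrow> d 0 = d0 \<and> d L = CARD('o) \<and>
     is_local_min (energy \<sigma> e D \<Omega> L) L d W \<and> energy \<sigma> e D \<Omega> L d W \<le> B \<and> is_proper L d W"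

lemma loss_bound_nonneg: "0 \<le> loss_bound B"
  by (simp add: loss_bound_def)

lemma input_bound_nonneg: "0 \<le> input_bound n"
  by (simp add: input_bound_def sum_nonneg sum_norm.norm_nonneg case_prod_unfold)

lemma energy_le_imp_bounds:
  assumes "energy \<sigma> e D \<Omega> L d W \<le> B" and "0 \<le> \<Omega> d W" and "0 < lam"
  shows "\<Omega> d W \<le> lam * (max B 0 / lam)"
    and "\<forall>(x, y)\<in>D. e (net \<sigma> L d W x) y \<le> loss_bound B"
    and "\<forall>(x, y)\<in>D. sum_norm (d 0) x \<le> input_bound (d 0)"
proof -
  define Ls where "Ls = (\<Sum>(x, y)\<in>D. e (net \<sigma> L d W x) y)"
  have "0 \<le> Ls / real (card D)"
    using e_nonneg by (simp add: Ls_def sum_nonneg case_prod_unfold)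
  moreover have E: "Ls / real (card D) + \<Omega> d W \<le> B"
    using assms(1) by (simp add: energy_def Ls_def)
  ultimately show "\<Omega> d W \<le> lam * (max B 0 / lam)"
    using \<open>0 < lam\<close> by simp
  show "\<forall>(x, y)\<in>D. e (net \<sigma> L d W x) y \<le> loss_bound B"
  proof safe
    fix x y assume xy: "(x, y) \<in> D"
    then have "0 < card D" using finD card_gt_0_iff by blast
    have "e (net \<sigma> L d W x) y \<le> Ls"
      unfolding Ls_def using member_le_sum[OF xy, of "\<lambda>(x, y). e (net \<sigma> L d W x) y"] finD e_nonneg
      by (simp add: case_prod_unfold)
    also have "Ls \<le> loss_bound B"
    proof -
      have "Ls / real (card D) \<le> max B 0" using E \<open>0 \<le> \<Omega> d W\<close> by linarith
      then show ?thesis using \<open>0 < card D\<close> by (simp add: loss_bound_def pos_divide_le_eq mult.commute)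
    qed
    finally show "e (net \<sigma> L d W x) y \<le> loss_bound B" .
  qed
  show "\<forall>(x, y)\<in>D. sum_norm (d 0) x \<le> input_bound (d 0)"
  proof safe
    fix x y assume xy: "(x, y) \<in> D"
    show "sum_norm (d 0) x \<le> input_bound (d 0)"
      using member_le_sum[OF xy, of "\<lambda>(x, y). sum_norm (d 0) x"] finD
      by (simp add: input_bound_def case_prod_unfold sum_norm.norm_nonneg)
  qed
qed

lemma Omega_out_width_le:
  assumes "0 < lam" and "0 < p"
    and min: "is_local_min (energy \<sigma> e D (Omega_out lam p L) L) L d W"
    and reg: "Omega_out lam p L d W \<le> lam * R" and "0 \<le> R"
    and input: "\<forall>(x, y)\<in>D. sum_norm (d 0) x \<le> X0" and "0 \<le> X0"
    and loss: "\<forall>(x, y)\<in>D. e (net \<sigma> L d W x) y \<le> S" and "0 \<le> S" and dL: "d L = CARD('o)"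
    and proper: "is_proper L d W" and l: "l \<in> {1..<L}"
  shows "real (d l) \<le> width_bound (real CARD('o) * fan_in_coeff S X0 R l) R lam p (d (l - 1))"
proof (rule width_le_width_bound[where a = "W l"])
  have gain: "layer_gains_le max_norm L d W R"
    using reg \<open>0 < lam\<close> \<open>0 < p\<close> by (rule Omega_out_le_imp_max_norm_gains)
  have "max_norm (d 0) x \<le> sum_norm (d 0) x" for x
    using max_norm.norm_le_sum_abs by (simp add: sum_norm_def)
  then have input': "\<forall>(x, y)\<in>D. max_norm (d 0) x \<le> X0"
    using input by (fastforce intro: order_trans)
  show "lam \<le> real CARD('o) * fan_in_coeff S X0 R l * (\<Sum>i<d (l - 1). \<bar>W l i j\<bar>)" if "j < d l" for j
  proof -
    obtain k where "k < d (Suc l)" "W (Suc l) j k \<noteq> 0"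
      using is_proper_imp_fans_nonzero[OF proper l \<open>j < d l\<close>] by blast
    from fan_in_lower_bound[OF assms(1,2) min gain input' assms(7,5) loss assms(9) dL l that this]
    show ?thesis .
  qed
  show "pnorm p (d l) (W l i) \<le> R" if "i < d (l - 1)" for i
  proof -
    have "pnorm p (d l) (W l i) \<le> (\<Sum>i<d (l - 1). pnorm p (d l) (W l i))"
      using that by (intro member_le_sum) (auto simp: pnorm_nonneg)
    also have "\<dots> \<le> R" using Omega_out_layer_le[OF reg \<open>0 < lam\<close>, of l] l by simp
    finally show ?thesis .
  qed
  show "0 \<le> real CARD('o) * fan_in_coeff S X0 R l"
    using fan_coeffs_nonneg(1)[OF \<open>0 \<le> S\<close> \<open>0 \<le> X0\<close> \<open>0 \<le> R\<close> l] by simp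
qed (fact assms)+

lemma Omega_in_width_le:
  assumes "0 < lam" and "0 < p"
    and min: "is_local_min (energy \<sigma> e D (Omega_in lam p L) L) L d W"
    and reg: "Omega_in lam p L d W \<le> lam * R" and "0 \<le> R"
    and input: "\<forall>(x, y)\<in>D. sum_norm (d 0) x \<le> X0" and "0 \<le> X0"
    and loss: "\<forall>(x, y)\<in>D. e (net \<sigma> L d W x) y \<le> S" and "0 \<le> S" and dL: "d L = CARD('o)"
    and proper: "is_proper L d W" and l: "l \<in> {1..<L}"
  shows "real (d l) \<le> width_bound (real CARD('o) * fan_out_coeff S X0 R l) R lam p (d (Suc l))"
proof (rule width_le_width_bound[where a = "\<lambda>k j. W (Suc l) j k"])
  have gain: "layer_gains_le sum_norm L d W R"
    using reg \<open>0 < lam\<close> \<open>0 < p\<close> by (rule Omega_in_le_imp_sum_norm_gains)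
  show "lam \<le> real CARD('o) * fan_out_coeff S X0 R l * (\<Sum>k<d (Suc l). \<bar>W (Suc l) j k\<bar>)"
    if "j < d l" for j
  proof -
    obtain i where "i < d (l - 1)" "W l i j \<noteq> 0"
      using is_proper_imp_fans_nonzero[OF proper l \<open>j < d l\<close>] by blast
    from fan_out_lower_bound[OF assms(1,2) min gain input assms(7,5) loss assms(9) dL l that this]
    show ?thesis .
  qed
  show "pnorm p (d l) (\<lambda>j. W (Suc l) j k) \<le> R" if "k < d (Suc l)" for k
  proof -
    have "pnorm p (d l) (\<lambda>j. W (Suc l) j k) \<le> (\<Sum>k<d (Suc l). pnorm p (d l) (\<lambda>j. W (Suc l) j k))"
      using that by (intro member_le_sum) (auto simp: pnorm_nonneg)
    also have "\<dots> \<le> R" using Omega_in_layer_le[OF reg \<open>0 < lam\<close>, of "Suc l"] l by simp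
    finally show ?thesis .
  qed
  show "0 \<le> real CARD('o) * fan_out_coeff S X0 R l"
    using fan_coeffs_nonneg(2)[OF \<open>0 \<le> S\<close> \<open>0 \<le> X0\<close> \<open>0 \<le> R\<close> l] by simp
qed (fact assms)+

lemma Omega_out_widths_bounded:
  assumes "0 < lam" and "0 < p"
  shows "\<exists>M. \<forall>d W. admissible (Omega_out lam p L) d0 B d W \<longrightarrow> (\<forall>l\<in>{1..<L}. d l \<le> M)"
proof -
  define R where "R = max B 0 / lam"
  define F where
    "F l = width_bound (real CARD('o) * fan_in_coeff (loss_bound B) (input_bound d0) R (Suc l)) R lam p"
    for l
  have R: "0 \<le> R" using \<open>0 < lam\<close> by (simp add: R_def)
  have "real (d (Suc l)) \<le> F l (d l)" if adm: "\<exists>W. admissible (Omega_out lam p L) d0 B d W"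
    and l: "l < L - 1" for d l
  proof -
    obtain W where "d 0 = d0" and dL: "d L = CARD('o)"
      and min: "is_local_min (energy \<sigma> e D (Omega_out lam p L) L) L d W"
      and E: "energy \<sigma> e D (Omega_out lam p L) L d W \<le> B" and proper: "is_proper L d W"
      using adm unfolding admissible_def by blast
    note bounds = energy_le_imp_bounds[OF E Omega_out_nonneg[OF less_imp_le[OF \<open>0 < lam\<close>]] \<open>0 < lam\<close>]
    have "real (d (Suc l)) \<le> F l (d (Suc l - 1))"
      unfolding F_def
      using bounds(3) \<open>d 0 = d0\<close> l
      by (intro Omega_out_width_le[OF assms min bounds(1)[folded R_def] R _ input_bound_nonneg
            bounds(2) loss_bound_nonneg dL proper]) auto
    then show ?thesis by simp
  qed
  moreover have "mono (F l)" if "l < L - 1" for l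
    unfolding F_def using that assms
    by (intro mono_width_bound mult_nonneg_nonneg fan_coeffs_nonneg(1)[OF loss_bound_nonneg
          input_bound_nonneg R]) auto
  moreover have "d 0 \<le> d0" if "\<exists>W. admissible (Omega_out lam p L) d0 B d W" for d
    using that by (auto simp: admissible_def)
  ultimately obtain M where "\<forall>d. (\<exists>W. admissible (Omega_out lam p L) d0 B d W) \<longrightarrow> (\<forall>l\<le>L - 1. d l \<le> M)"
    using bounded_by_monotone_recurrence[of "\<lambda>d. \<exists>W. admissible (Omega_out lam p L) d0 B d W" d0 "L - 1" F]
    by blast
  then show ?thesis by (intro exI[of _ M]) fastforce
qed

text \<open>\<open>Omega_in\<close> bounds each width in terms of the next one, so the recurrence runs from the output
  layer downwards, on the reversed dimension tuple.\<close>

lemma Omega_in_widths_bounded: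
  assumes "0 < lam" and "0 < p"
  shows "\<exists>M. \<forall>d W. admissible (Omega_in lam p L) d0 B d W \<longrightarrow> (\<forall>l\<in>{1..<L}. d l \<le> M)"
proof -
  define R where "R = max B 0 / lam"
  define F where
    "F q = width_bound (real CARD('o) * fan_out_coeff (loss_bound B) (input_bound d0) R (L - Suc q)) R lam p"
    for q
  have R: "0 \<le> R" using \<open>0 < lam\<close> by (simp add: R_def)
  let ?reversed = "\<lambda>d'. \<exists>d W. admissible (Omega_in lam p L) d0 B d W \<and> d' = (\<lambda>q. d (L - q))"
  have "real (d' (Suc q)) \<le> F q (d' q)" if rev: "?reversed d'" and q: "q < L - 1" for d' q
  proof -
    obtain d W where d': "d' = (\<lambda>q. d (L - q))" and "d 0 = d0" and dL: "d L = CARD('o)"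
      and min: "is_local_min (energy \<sigma> e D (Omega_in lam p L) L) L d W"
      and E: "energy \<sigma> e D (Omega_in lam p L) L d W \<le> B" and proper: "is_proper L d W"
      using rev unfolding admissible_def by blast
    note bounds = energy_le_imp_bounds[OF E Omega_in_nonneg[OF less_imp_le[OF \<open>0 < lam\<close>]] \<open>0 < lam\<close>]
    have "real (d (L - Suc q)) \<le> F q (d (Suc (L - Suc q)))"
      unfolding F_def
      using bounds(3) \<open>d 0 = d0\<close> q
      by (intro Omega_in_width_le[OF assms min bounds(1)[folded R_def] R _ input_bound_nonneg
            bounds(2) loss_bound_nonneg dL proper]) auto
    moreover have "Suc (L - Suc q) = L - q" using q by simp
    ultimately show ?thesis by (simp add: d')
  qed
  moreover have "mono (F q)" if "q < L - 1" for q
    unfolding F_def using that assms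
    by (intro mono_width_bound mult_nonneg_nonneg fan_coeffs_nonneg(2)[OF loss_bound_nonneg
          input_bound_nonneg R]) auto
  moreover have "d' 0 \<le> CARD('o)" if "?reversed d'" for d'
    using that by (auto simp: admissible_def)
  ultimately obtain M where M: "\<forall>d'. ?reversed d' \<longrightarrow> (\<forall>q\<le>L - 1. d' q \<le> M)"
    using bounded_by_monotone_recurrence[of ?reversed "CARD('o)" "L - 1" F] by blast
  have "d l \<le> M" if "admissible (Omega_in lam p L) d0 B d W" and "l \<in> {1..<L}" for d W l
  proof -
    have "?reversed (\<lambda>q. d (L - q))" using that(1) by blast
    with M have "\<forall>q\<le>L - 1. d (L - q) \<le> M" by blast
    then show ?thesis using that(2) by (auto dest: spec[of _ "L - l"])
  qed
  then show ?thesis by blast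
qed

end

theorem lemma4:
  fixes \<sigma> :: "nat \<Rightarrow> real \<Rightarrow> real"
    and e :: "real^'o::finite \<Rightarrow> 'y \<Rightarrow> real"
    and D :: "((nat \<Rightarrow> real) \<times> 'y) set"
    and L d0 :: nat
    and lam p B :: real
    and \<Omega> :: "(nat \<Rightarrow> nat) \<Rightarrow> (nat \<Rightarrow> nat \<Rightarrow> nat \<Rightarrow> real) \<Rightarrow> real"
    and b1 b2 :: "nat \<Rightarrow> real \<Rightarrow> real" and b3 :: "real \<Rightarrow> real"
  assumes finD: "finite D"
    and sig_left: "\<forall>l\<in>{1..L}. \<forall>s. \<exists>Dl. (\<sigma> l has_real_derivative Dl) (at_left s)"
    and sig_right: "\<forall>l\<in>{1..L}. \<forall>s. \<exists>Dr. (\<sigma> l has_real_derivative Dr) (at_right s)"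
    and b1_nonneg: "\<forall>l\<in>{1..L}. \<forall>S\<ge>0. b1 l S \<ge> 0"
    and b2_nonneg: "\<forall>l\<in>{1..L}. \<forall>S\<ge>0. b2 l S \<ge> 0"
    and sig_b1: "\<forall>l\<in>{1..L}. \<forall>S s. \<bar>s\<bar> \<le> S \<longrightarrow> \<bar>\<sigma> l s\<bar> \<le> b1 l S * \<bar>s\<bar>"
    and sig_b2_left: "\<forall>l\<in>{1..L}. \<forall>S s Dl. \<bar>s\<bar> \<le> S \<longrightarrow>
         (\<sigma> l has_real_derivative Dl) (at_left s) \<longrightarrow> \<bar>Dl\<bar> \<le> b2 l S"
    and sig_b2_right: "\<forall>l\<in>{1..L}. \<forall>S s Dr. \<bar>s\<bar> \<le> S \<longrightarrow>
         (\<sigma> l has_real_derivative Dr) (at_right s) \<longrightarrow> \<bar>Dr\<bar> \<le> b2 l S"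
    and e_nonneg: "\<forall>v y. e v y \<ge> 0"
    and e_diff: "\<forall>v y. (\<lambda>w. e w y) differentiable (at v)"
    and b3_nonneg: "\<forall>S\<ge>0. b3 S \<ge> 0"
    and e_grad: "\<forall>S v y De. e v y \<le> S \<longrightarrow> ((\<lambda>w. e w y) has_derivative De) (at v) \<longrightarrow>
         (\<forall>k. \<bar>De (axis k 1)\<bar> \<le> b3 S)"
    and lam_pos: "lam > 0"
    and p_ge: "1 \<le> p"
    and Omega: "\<Omega> = Omega_in lam p L \<or> \<Omega> = Omega_out lam p L"
  shows "\<exists>M::nat. \<forall>d W.
           d 0 = d0 \<and> d L = CARD('o) \<and>
           is_local_min (energy \<sigma> e D \<Omega> L) L d W \<and>
           energy \<sigma> e D \<Omega> L d W \<le> B \<and> is_proper L d W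
           \<longrightarrow> (\<forall>l\<in>{1..<L}. d l \<le> M)"
proof -
  interpret training_problem \<sigma> L b1 b2 e b3 D
    by unfold_locales (fact assms)+
  have "0 < p" using p_ge by simp
  with Omega show ?thesis
    using Omega_in_widths_bounded[OF lam_pos] Omega_out_widths_bounded[OF lam_pos]
    unfolding admissible_def by blast
qed

end
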